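(* Let $G$ be a connected semisimple real algebraic group and $\theta\subset\Pi$ non-empty with $\theta=\mathrm i(\theta)$. Let $\mathcal D$ be a $\theta$-admissible cone of $\mathfrak a^+$. Then for any open cone $\mathcal C_0$ in $\mathfrak a^+$ containing $\mathcal D-\{0\}$, there exists a $\theta$-admissible closed cone $\mathcal C$ such that $\mathcal D-\{0\}\subset\operatorname{int}\mathcal C\subset\mathcal C\subset\mathcal C_0\cup\{0\}$.
   Context: $\mathfrak a$ is the Lie algebra of a maximal real split torus, $\mathfrak a^+$ a closed positive Weyl chamber, $\Pi$ the simple roots, $\mathcal W$ the Weyl group acting on $\mathfrak a$ by Ad, $\mathrm i(v)=-\mathrm{Ad}_{w_0}v$ the opposition involution ($w_0$ longest element), acting on $\Pi$ by $\mathrm i(\alpha)=\alpha\circ\mathrm i$. $\mathcal W_\theta$ is the subgroup of $\mathcal W$ fixing $\mathfrak a_\theta=\bigcap_{\alpha\in\Pi-\theta}\ker\alpha$ pointwise. For $\theta=\mathrm i(\theta)$, a closed cone $\mathcal C\subset\mathfrak a^+$ is $\theta$-admissible if (1) $\mathrm i(\mathcal C)=\mathcal C$, (2) $\mathcal W_\theta\mathcal C$ is convex, (3) $\mathcal C\cap\bigcup_{\alpha\in\theta}\ker\alpha=\{0\}$. An open cone in $\mathfrak a^+$ is a relatively open subset of $\mathfrak a^+$ invariant under positive scaling. *)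

theory Defs
  imports "HOL-Analysis.Analysis"
begin

text \<open>The statement only depends on the restricted root system of G, realised in
  the Euclidean space 'a (= Lie algebra of a maximal split torus, with the Killing
  form inner product). Roots/functionals alpha are represented by vectors, alpha(v) = alpha \<bullet> v.\<close>

definition refl :: "'a::euclidean_space \<Rightarrow> 'a \<Rightarrow> 'a" where
  "refl \<alpha> v = v - (2 * (\<alpha> \<bullet> v) / (\<alpha> \<bullet> \<alpha>)) *\<^sub>R \<alpha>"

text \<open>A (possibly non-reduced) crystallographic root system spanning 'a
  (semisimplicity: the roots span the split Cartan subspace).\<close>
definition root_system :: "'a::euclidean_space set \<Rightarrow> bool" where
  "root_system R \<longleftrightarrow> finite R \<and> 0 \<notin> R \<and> span R = UNIV \<and>
     (\<forall>\<alpha>\<in>R. \<forall>\<beta>\<in>R. refl \<alpha> \<beta> \<in> R) \<and>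
     (\<forall>\<alpha>\<in>R. \<forall>\<beta>\<in>R. 2 * (\<alpha> \<bullet> \<beta>) / (\<alpha> \<bullet> \<alpha>) \<in> \<int>)"

definition is_base :: "'a::euclidean_space set \<Rightarrow> 'a set \<Rightarrow> bool" where
  "is_base R \<Delta> \<longleftrightarrow> \<Delta> \<subseteq> R \<and> independent \<Delta> \<and>
     (\<forall>\<beta>\<in>R. \<exists>c. \<beta> = (\<Sum>\<alpha>\<in>\<Delta>. c \<alpha> *\<^sub>R \<alpha>) \<and>
        ((\<forall>\<alpha>\<in>\<Delta>. c \<alpha> \<ge> 0) \<or> (\<forall>\<alpha>\<in>\<Delta>. c \<alpha> \<le> 0)))"

definition chamber :: "'a::euclidean_space set \<Rightarrow> 'a set" where
  "chamber \<Delta> = {v. \<forall>\<alpha>\<in>\<Delta>. \<alpha> \<bullet> v \<ge> 0}"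

inductive_set weyl :: "'a::euclidean_space set \<Rightarrow> ('a \<Rightarrow> 'a) set" for R where
  weyl_id: "id \<in> weyl R"
| weyl_step: "\<alpha> \<in> R \<Longrightarrow> w \<in> weyl R \<Longrightarrow> refl \<alpha> \<circ> w \<in> weyl R"

definition w0 :: "'a::euclidean_space set \<Rightarrow> 'a set \<Rightarrow> 'a \<Rightarrow> 'a" where
  "w0 R \<Delta> = (THE w. w \<in> weyl R \<and> w ` chamber \<Delta> = uminus ` chamber \<Delta>)"

definition opp :: "'a::euclidean_space set \<Rightarrow> 'a set \<Rightarrow> 'a \<Rightarrow> 'a" where
  "opp R \<Delta> v = - w0 R \<Delta> v"

definition a_theta :: "'a::euclidean_space set \<Rightarrow> 'a set \<Rightarrow> 'a set" where
  "a_theta \<Delta> \<theta> = {v. \<forall>\<alpha>\<in>\<Delta> - \<theta>. \<alpha> \<bullet> v = 0}"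

definition weyl_theta :: "'a::euclidean_space set \<Rightarrow> 'a set \<Rightarrow> 'a set \<Rightarrow> ('a \<Rightarrow> 'a) set" where
  "weyl_theta R \<Delta> \<theta> = {w \<in> weyl R. \<forall>v\<in>a_theta \<Delta> \<theta>. w v = v}"

definition pos_cone :: "'a::real_vector set \<Rightarrow> bool" where
  "pos_cone C \<longleftrightarrow> (\<forall>x\<in>C. \<forall>t::real. t > 0 \<longrightarrow> t *\<^sub>R x \<in> C)"

definition admissible :: "'a::euclidean_space set \<Rightarrow> 'a set \<Rightarrow> 'a set \<Rightarrow> 'a set \<Rightarrow> bool" where
  "admissible R \<Delta> \<theta> C \<longleftrightarrow>
     closed C \<and> pos_cone C \<and> C \<subseteq> chamber \<Delta> \<and>
     opp R \<Delta> ` C = C \<and>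
     convex (\<Union>w\<in>weyl_theta R \<Delta> \<theta>. w ` C) \<and>
     C \<inter> (\<Union>\<alpha>\<in>\<theta>. {v. \<alpha> \<bullet> v = 0}) = {0}"

end

theory Submission
  imports Defs
begin

(*
  Let P = W\<^sub>\<theta> D be the W\<^sub>\<theta>-orbit of D.  Admissibility of D makes P a closed convex cone,
  stable under W\<^sub>\<theta> and under the opposition involution \<iota>.  The vector e\<^sub>\<theta> dual to \<theta>
  (\<alpha>(e\<^sub>\<theta>) = 1 for \<alpha> \<in> \<theta> and 0 for \<alpha> \<in> \<Delta> - \<theta>) is fixed by W\<^sub>\<theta> and \<iota> and is positive
  on D - {0}.  Hence for \<epsilon> > 0 the thickening
    N = {v. dist(v, P) \<le> \<epsilon> \<langle>v, e\<^sub>\<theta>\<rangle>}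
  is a closed convex cone, stable under W\<^sub>\<theta> and \<iota>, that contains a neighbourhood of D - {0}.
  The cone C = a\<^sup>+ \<inter> N is \<theta>-admissible: W\<^sub>\<theta> C = N \<inter> W\<^sub>\<theta> a\<^sup>+, and W\<^sub>\<theta> a\<^sup>+ is the convex
  cone on which every root positive on e\<^sub>\<theta> is nonnegative.  As a\<^sup>+ is a fundamental domain for
  the Weyl group, P \<inter> a\<^sup>+ = D; so the compact set of unit vectors of a\<^sup>+ lying outside C0 or on
  a \<theta>-wall misses P, hence misses N for small \<epsilon>.  This gives C \<subseteq> C0 \<union> {0} and the wall
  condition.
*)

section \<open>Reflections\<close>

lemma orthogonal_transformation_refl:
  assumes "a \<noteq> 0" shows "orthogonal_transformation (refl a)"
proof -
  have "linear (refl a)"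
    unfolding refl_def
    by (rule linearI)
      (simp_all add: inner_add_right add_divide_distrib scaleR_add_left algebra_simps)
  moreover have "refl a x \<bullet> refl a y = x \<bullet> y" for x y
    using assms by (simp add: refl_def inner_diff_left inner_diff_right algebra_simps inner_commute)
  ultimately show ?thesis by (simp add: orthogonal_transformation_def)
qed

lemma refl_refl: "a \<noteq> 0 \<Longrightarrow> refl a (refl a x) = x"
  by (simp add: refl_def inner_diff_right algebra_simps)

lemma refl_self: "a \<noteq> 0 \<Longrightarrow> refl a a = - a"
  by (simp add: refl_def algebra_simps scaleR_2)

lemma refl_scaleR: "c \<noteq> 0 \<Longrightarrow> refl (c *\<^sub>R a) = refl a"
  by (cases "a = 0") (auto simp: refl_def fun_eq_iff field_simps power2_eq_square)

lemma refl_fixed: "a \<bullet> x = 0 \<Longrightarrow> refl a x = x"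
  by (simp add: refl_def)

lemma inner_refl_left: "refl a x \<bullet> h = x \<bullet> h - (2 * (a \<bullet> x) / (a \<bullet> a)) * (a \<bullet> h)"
  by (simp add: refl_def inner_diff_left)

lemma orthogonal_transformation_refl_conj:
  "orthogonal_transformation f \<Longrightarrow> f (refl b x) = refl (f b) (f x)"
  unfolding refl_def orthogonal_transformation_def by (simp add: linear_diff linear_scale)

primrec refl_word :: "'a::euclidean_space list \<Rightarrow> 'a \<Rightarrow> 'a" where
  "refl_word [] = id"
| "refl_word (a # as) = refl a \<circ> refl_word as"

lemma refl_word_append: "refl_word (xs @ ys) = refl_word xs \<circ> refl_word ys"
  by (induction xs) (auto simp: comp_assoc)

lemma orthogonal_transformation_refl_word:
  "0 \<notin> set as \<Longrightarrow> orthogonal_transformation (refl_word as)"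
  by (induction as)
    (auto simp: id_def orthogonal_transformation_refl orthogonal_transformation_compose)

lemma refl_word_rev: "0 \<notin> set as \<Longrightarrow> refl_word as (refl_word (rev as) x) = x"
  by (induction as arbitrary: x) (simp_all add: refl_word_append refl_refl)

lemma independent_dual_vector:
  fixes B :: "'a::euclidean_space set"
  assumes "independent B" shows "\<exists>x. \<forall>b\<in>B. b \<bullet> x = f b"
proof -
  obtain g :: "'a \<Rightarrow> real" where g: "linear g" "\<forall>x\<in>B. g x = f x"
    using linear_independent_extend[OF assms] by blast
  show ?thesis
    by (rule exI[of _ "adjoint g 1"]) (simp add: adjoint_works[OF g(1)] g(2))
qed

section \<open>Cone thickenings\<close>

definition cone_thickening :: "'a::euclidean_space set \<Rightarrow> 'a \<Rightarrow> real \<Rightarrow> 'a set" where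
  "cone_thickening P e \<epsilon> = {v. \<exists>p\<in>P. dist v p \<le> \<epsilon> * (v \<bullet> e)}"

lemma convex_cone_thickening:
  assumes "convex P" shows "convex (cone_thickening P e \<epsilon>)"
proof (rule convexI)
  fix x y and u v :: real
  assume "x \<in> cone_thickening P e \<epsilon>" "y \<in> cone_thickening P e \<epsilon>" and uv: "0 \<le> u" "0 \<le> v" "u + v = 1"
  then obtain p q where p: "p \<in> P" "dist x p \<le> \<epsilon> * (x \<bullet> e)" and q: "q \<in> P" "dist y q \<le> \<epsilon> * (y \<bullet> e)"
    by (auto simp: cone_thickening_def)
  have "dist (u *\<^sub>R x + v *\<^sub>R y) (u *\<^sub>R p + v *\<^sub>R q) = norm (u *\<^sub>R (x - p) + v *\<^sub>R (y - q))"
    by (simp add: dist_norm algebra_simps)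
  also have "\<dots> \<le> u * dist x p + v * dist y q"
    using norm_triangle_ineq[of "u *\<^sub>R (x - p)" "v *\<^sub>R (y - q)"] uv by (simp add: dist_norm)
  also have "\<dots> \<le> u * (\<epsilon> * (x \<bullet> e)) + v * (\<epsilon> * (y \<bullet> e))"
    using p(2) q(2) uv by (intro add_mono mult_left_mono) auto
  also have "\<dots> = \<epsilon> * ((u *\<^sub>R x + v *\<^sub>R y) \<bullet> e)" by (simp add: algebra_simps inner_add_left)
  finally show "u *\<^sub>R x + v *\<^sub>R y \<in> cone_thickening P e \<epsilon>"
    using convexD[OF assms p(1) q(1) uv] by (auto simp: cone_thickening_def)
qed

lemma closed_cone_thickening:
  assumes "closed P" shows "closed (cone_thickening P e \<epsilon>)"
proof (cases "P = {}")
  case True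
  then show ?thesis by (simp add: cone_thickening_def)
next
  case False
  have "cone_thickening P e \<epsilon> = {v. infdist v P \<le> \<epsilon> * (v \<bullet> e)}"
  proof (intro set_eqI iffI)
    fix v assume "v \<in> cone_thickening P e \<epsilon>"
    then show "v \<in> {v. infdist v P \<le> \<epsilon> * (v \<bullet> e)}"
      using infdist_le order_trans unfolding cone_thickening_def by blast
  next
    fix v assume "v \<in> {v. infdist v P \<le> \<epsilon> * (v \<bullet> e)}"
    moreover obtain p where "p \<in> P" "infdist v P = dist v p"
      using infdist_attains_inf[OF assms False] by blast
    ultimately show "v \<in> cone_thickening P e \<epsilon>" unfolding cone_thickening_def by auto
  qed
  then show ?thesis by (simp add: closed_Collect_le continuous_on_infdist continuous_intros)
qed

lemma pos_cone_cone_thickening: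
  assumes "pos_cone P" shows "pos_cone (cone_thickening P e \<epsilon>)"
  unfolding pos_cone_def
proof (intro ballI allI impI)
  fix v and t :: real assume "v \<in> cone_thickening P e \<epsilon>" "0 < t"
  then obtain p where p: "p \<in> P" "dist v p \<le> \<epsilon> * (v \<bullet> e)" by (auto simp: cone_thickening_def)
  have "dist (t *\<^sub>R v) (t *\<^sub>R p) = t * dist v p"
    using \<open>0 < t\<close> by (simp add: dist_norm flip: scaleR_diff_right)
  also have "\<dots> \<le> \<epsilon> * ((t *\<^sub>R v) \<bullet> e)" using p(2) \<open>0 < t\<close> by simp
  finally show "t *\<^sub>R v \<in> cone_thickening P e \<epsilon>"
    using assms p(1) \<open>0 < t\<close> unfolding pos_cone_def cone_thickening_def by blast
qed

lemma orthogonal_transformation_cone_thickening: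
  assumes g: "orthogonal_transformation g" "g e = e" "g ` P \<subseteq> P"
  shows "g ` cone_thickening P e \<epsilon> \<subseteq> cone_thickening P e \<epsilon>"
proof (rule image_subsetI)
  fix v assume "v \<in> cone_thickening P e \<epsilon>"
  then obtain p where p: "p \<in> P" "dist v p \<le> \<epsilon> * (v \<bullet> e)" by (auto simp: cone_thickening_def)
  have "dist (g v) (g p) = dist v p"
    using g(1) by (simp add: dist_norm orthogonal_transformation_norm
        flip: linear_diff[OF orthogonal_transformation_linear[OF g(1)]])
  moreover have "g v \<bullet> e = v \<bullet> e"
    using g(1,2) unfolding orthogonal_transformation_def by metis
  ultimately show "g v \<in> cone_thickening P e \<epsilon>"
    using g(3) p unfolding cone_thickening_def by force
qed

lemma interior_of_cone_thickening:
  assumes "d \<in> S" "d \<in> P" "0 < \<epsilon>" "0 < d \<bullet> e"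
  shows "d \<in> top_of_set S interior_of (S \<inter> cone_thickening P e \<epsilon>)"
proof -
  define r where "r = \<epsilon> * (d \<bullet> e) / (1 + \<epsilon> * norm e)"
  have "0 < 1 + \<epsilon> * norm e" using assms(3) by (simp add: add_pos_nonneg)
  then have r: "0 < r" "r * (1 + \<epsilon> * norm e) = \<epsilon> * (d \<bullet> e)"
    unfolding r_def using assms(3,4) by simp_all
  have "ball d r \<subseteq> cone_thickening P e \<epsilon>"
  proof
    fix v assume "v \<in> ball d r"
    then have vd: "dist v d < r" by (simp add: dist_commute)
    have "(d - v) \<bullet> e \<le> dist v d * norm e"
      using norm_cauchy_schwarz[of "d - v" e] by (simp add: dist_norm norm_minus_commute)
    also have "\<dots> \<le> r * norm e" using vd by (simp add: mult_right_mono)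
    finally have "\<epsilon> * (d \<bullet> e) - \<epsilon> * (v \<bullet> e) \<le> \<epsilon> * (r * norm e)"
      using assms(3) by (simp add: inner_diff_left flip: right_diff_distrib)
    then have "dist v d \<le> \<epsilon> * (v \<bullet> e)" using r(2) vd by (simp add: algebra_simps)
    then show "v \<in> cone_thickening P e \<epsilon>" using assms(2) unfolding cone_thickening_def by blast
  qed
  then have "S \<inter> ball d r \<subseteq> S \<inter> cone_thickening P e \<epsilon>" by blast
  moreover have "openin (top_of_set S) (S \<inter> ball d r)" by (simp add: openin_open_Int)
  moreover have "d \<in> S \<inter> ball d r" using assms(1) r(1) by simp
  ultimately show ?thesis unfolding interior_of_def by blast
qed

lemma compact_disjoint_cone_thickening:
  fixes K P :: "'a::euclidean_space set"
  assumes "compact K" "closed P" "K \<inter> P = {}"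
  shows "\<exists>\<epsilon>>0. K \<inter> cone_thickening P e \<epsilon> = {}"
proof (cases "K = {} \<or> P = {}")
  case True
  then show ?thesis by (auto simp: cone_thickening_def intro: exI[of _ 1])
next
  case False
  have "continuous_on K (\<lambda>v. infdist v P)" by (intro continuous_on_infdist continuous_on_id)
  then obtain k where k: "k \<in> K" "\<And>v. v \<in> K \<Longrightarrow> infdist k P \<le> infdist v P"
    using continuous_attains_inf[OF assms(1)] False by blast
  have m: "0 < infdist k P"
    using infdist_pos_not_in_closed[OF assms(2)] False k(1) assms(3) by blast
  obtain B where B: "0 < B" "\<And>v. v \<in> K \<Longrightarrow> norm v \<le> B"
    using compact_imp_bounded[OF assms(1)] bounded_pos by metis
  define \<epsilon> where "\<epsilon> = infdist k P / (B * norm e + 1)"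
  have "0 \<le> B * norm e" using B(1) by simp
  then have "0 < B * norm e + 1" by linarith
  then have \<epsilon>: "0 < \<epsilon>" "\<epsilon> * (B * norm e) < infdist k P"
    unfolding \<epsilon>_def using m by (simp_all add: field_simps)
  have "v \<notin> cone_thickening P e \<epsilon>" if v: "v \<in> K" for v
  proof
    assume "v \<in> cone_thickening P e \<epsilon>"
    then obtain p where p: "p \<in> P" "dist v p \<le> \<epsilon> * (v \<bullet> e)" by (auto simp: cone_thickening_def)
    have "v \<bullet> e \<le> B * norm e"
      using norm_cauchy_schwarz[of v e] mult_right_mono[OF B(2)[OF v] norm_ge_zero[of e]]
      by linarith
    then have "\<epsilon> * (v \<bullet> e) \<le> \<epsilon> * (B * norm e)" using \<epsilon>(1) by simp
    moreover have "infdist k P \<le> dist v p" using k(2)[OF v] infdist_le[OF p(1), of v] by linarith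
    ultimately show False using p(2) \<epsilon>(2) by linarith
  qed
  then show ?thesis using \<epsilon>(1) by blast
qed

lemma pos_cone_Diff_zero_subset:
  fixes C S :: "'a::real_normed_vector set"
  assumes "pos_cone C" "pos_cone S" "C \<inter> sphere 0 1 \<subseteq> S" shows "C - {0} \<subseteq> S"
proof
  fix v assume v: "v \<in> C - {0}"
  then have pos: "0 < norm v" "0 < inverse (norm v)" by auto
  then have "inverse (norm v) *\<^sub>R v \<in> C" using assms(1) v unfolding pos_cone_def by blast
  then have "inverse (norm v) *\<^sub>R v \<in> S" using assms(3) v by auto
  then have "norm v *\<^sub>R (inverse (norm v) *\<^sub>R v) \<in> S"
    using assms(2) pos unfolding pos_cone_def by blast
  then show "v \<in> S" using v by simp
qed

lemma compact_sphere_Diff_openin: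
  fixes S :: "'a::euclidean_space set"
  assumes "closed S" "openin (top_of_set S) U" shows "compact (S \<inter> sphere 0 1 - U)"
proof -
  obtain T where "open T" "U = S \<inter> T" using assms(2) by (auto simp: openin_open)
  then have "S \<inter> sphere 0 1 - U = S \<inter> sphere 0 1 - T" by auto
  then show ?thesis using \<open>open T\<close> assms(1) by (simp add: compact_diff closed_Int_compact)
qed

section \<open>Root systems and their Weyl groups\<close>

locale root_base =
  fixes R :: "'a::euclidean_space set" and \<Delta> :: "'a set"
  assumes root_system: "root_system R" and base: "is_base R \<Delta>"
begin

lemma finite_roots: "finite R" and zero_notin_roots: "0 \<notin> R"
  and span_roots: "span R = UNIV" and refl_root: "\<alpha> \<in> R \<Longrightarrow> \<beta> \<in> R \<Longrightarrow> refl \<alpha> \<beta> \<in> R"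
  using root_system unfolding root_system_def by blast+

lemma simple_subset_roots: "\<Delta> \<subseteq> R" and independent_simple: "independent \<Delta>"
  and root_simple_expansion: "\<beta> \<in> R \<Longrightarrow> \<exists>c. \<beta> = (\<Sum>\<alpha>\<in>\<Delta>. c \<alpha> *\<^sub>R \<alpha>) \<and>
        ((\<forall>\<alpha>\<in>\<Delta>. c \<alpha> \<ge> 0) \<or> (\<forall>\<alpha>\<in>\<Delta>. c \<alpha> \<le> 0))"
  using base unfolding is_base_def by blast+

lemma finite_simple: "finite \<Delta>"
  using simple_subset_roots finite_roots finite_subset by auto

lemma root_nonzero: "\<beta> \<in> R \<Longrightarrow> \<beta> \<noteq> 0"
  using zero_notin_roots by auto

lemma simple_root: "\<alpha> \<in> \<Delta> \<Longrightarrow> \<alpha> \<in> R"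
  using simple_subset_roots by auto

lemma simple_nonzero: "\<alpha> \<in> \<Delta> \<Longrightarrow> \<alpha> \<noteq> 0"
  using root_nonzero simple_root by auto

lemma uminus_root: "\<beta> \<in> R \<Longrightarrow> - \<beta> \<in> R"
  using refl_root[of \<beta> \<beta>] refl_self[of \<beta>] root_nonzero by auto

lemma span_simple: "span \<Delta> = UNIV"
proof -
  have "R \<subseteq> span \<Delta>"
  proof
    fix \<beta> assume "\<beta> \<in> R"
    then obtain c where "\<beta> = (\<Sum>\<alpha>\<in>\<Delta>. c \<alpha> *\<^sub>R \<alpha>)" using root_simple_expansion by blast
    then show "\<beta> \<in> span \<Delta>" by (simp add: span_sum span_scale span_base)
  qed
  then show ?thesis using span_roots span_minimal by blast
qed

text \<open>\<open>coweight \<delta>\<close> is the fundamental coweight of \<open>\<delta>\<close>, so \<open>x \<bullet> coweight \<delta>\<close> is the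
  \<open>\<delta>\<close>-coordinate of \<open>x\<close> in the basis \<open>\<Delta>\<close>.\<close>

definition coweight :: "'a \<Rightarrow> 'a" where
  "coweight \<delta> = (SOME x. \<forall>\<alpha>\<in>\<Delta>. \<alpha> \<bullet> x = (if \<alpha> = \<delta> then 1 else 0))"

definition height_vector :: 'a where
  "height_vector = (SOME x. \<forall>\<alpha>\<in>\<Delta>. \<alpha> \<bullet> x = 1)"

lemma inner_coweight: "\<alpha> \<in> \<Delta> \<Longrightarrow> \<alpha> \<bullet> coweight \<delta> = (if \<alpha> = \<delta> then 1 else 0)"
  using someI_ex[OF independent_dual_vector[OF independent_simple,
        of "\<lambda>\<alpha>. if \<alpha> = \<delta> then 1 else 0"]]
  unfolding coweight_def by blast

lemma inner_height_vector: "\<alpha> \<in> \<Delta> \<Longrightarrow> \<alpha> \<bullet> height_vector = 1"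
  using someI_ex[OF independent_dual_vector[OF independent_simple, of "\<lambda>_. 1"]]
  unfolding height_vector_def by blast

lemma inner_coweight_sum:
  assumes "\<delta> \<in> \<Delta>" shows "(\<Sum>v\<in>\<Delta>. u v *\<^sub>R v) \<bullet> coweight \<delta> = u \<delta>"
proof -
  have "(\<Sum>v\<in>\<Delta>. u v *\<^sub>R v) \<bullet> coweight \<delta> = (\<Sum>v\<in>\<Delta>. u v * (v \<bullet> coweight \<delta>))"
    by (simp add: inner_sum_left)
  also have "\<dots> = (\<Sum>v\<in>\<Delta>. if v = \<delta> then u v else 0)"
    by (rule sum.cong) (simp_all add: inner_coweight)
  finally show ?thesis using assms finite_simple by simp
qed

lemma coweight_expansion: "(\<Sum>\<delta>\<in>\<Delta>. (x \<bullet> coweight \<delta>) *\<^sub>R \<delta>) = x"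
proof -
  have "x \<in> span \<Delta>" using span_simple by auto
  then obtain u where u: "x = (\<Sum>v\<in>\<Delta>. u v *\<^sub>R v)"
    using span_finite[OF finite_simple] by auto
  have "(\<Sum>\<delta>\<in>\<Delta>. (x \<bullet> coweight \<delta>) *\<^sub>R \<delta>) = (\<Sum>v\<in>\<Delta>. u v *\<^sub>R v)"
    unfolding u by (rule sum.cong) (simp_all add: inner_coweight_sum)
  then show ?thesis using u by simp
qed

lemma inner_coweight_expansion: "x \<bullet> y = (\<Sum>\<delta>\<in>\<Delta>. (x \<bullet> coweight \<delta>) * (\<delta> \<bullet> y))"
proof -
  have "x \<bullet> y = (\<Sum>\<delta>\<in>\<Delta>. (x \<bullet> coweight \<delta>) *\<^sub>R \<delta>) \<bullet> y" by (simp only: coweight_expansion)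
  then show ?thesis by (simp add: inner_sum_left)
qed

lemma inner_height_vector_eq: "x \<bullet> height_vector = (\<Sum>\<delta>\<in>\<Delta>. x \<bullet> coweight \<delta>)"
  using inner_coweight_expansion[of x height_vector] by (simp add: inner_height_vector)

lemma eq_zero_if_inner_simple_zero: "(\<And>\<alpha>. \<alpha> \<in> \<Delta> \<Longrightarrow> \<alpha> \<bullet> x = 0) \<Longrightarrow> x = 0"
  using inner_coweight_expansion[of x x] by (simp add: inner_commute)

lemma eq_zero_if_coweights_zero:
  assumes "\<And>\<delta>. \<delta> \<in> \<Delta> \<Longrightarrow> x \<bullet> coweight \<delta> = 0" shows "x = 0"
proof -
  have "x = (\<Sum>\<delta>\<in>\<Delta>. (x \<bullet> coweight \<delta>) *\<^sub>R \<delta>)" by (simp only: coweight_expansion)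
  also have "\<dots> = 0" using assms by simp
  finally show ?thesis .
qed

lemma root_coweight_sign:
  assumes "\<beta> \<in> R"
  shows "(\<forall>\<delta>\<in>\<Delta>. 0 \<le> \<beta> \<bullet> coweight \<delta>) \<or> (\<forall>\<delta>\<in>\<Delta>. \<beta> \<bullet> coweight \<delta> \<le> 0)"
proof -
  obtain c where c: "\<beta> = (\<Sum>\<alpha>\<in>\<Delta>. c \<alpha> *\<^sub>R \<alpha>)" "(\<forall>\<alpha>\<in>\<Delta>. c \<alpha> \<ge> 0) \<or> (\<forall>\<alpha>\<in>\<Delta>. c \<alpha> \<le> 0)"
    using root_simple_expansion[OF assms] by blast
  have "\<beta> \<bullet> coweight \<delta> = c \<delta>" if "\<delta> \<in> \<Delta>" for \<delta>
    unfolding c(1) using inner_coweight_sum[OF that] .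
  then show ?thesis using c(2) by auto
qed

lemma root_height_pos:
  assumes "\<beta> \<in> R" "\<forall>\<delta>\<in>\<Delta>. 0 \<le> \<beta> \<bullet> coweight \<delta>" shows "0 < \<beta> \<bullet> height_vector"
proof -
  have "\<beta> \<bullet> height_vector \<ge> 0" using assms(2) by (simp add: inner_height_vector_eq sum_nonneg)
  moreover have "\<beta> \<bullet> height_vector \<noteq> 0"
  proof
    assume "\<beta> \<bullet> height_vector = 0"
    then have "\<forall>\<delta>\<in>\<Delta>. \<beta> \<bullet> coweight \<delta> = 0"
      using assms(2) sum_nonneg_eq_0_iff[OF finite_simple, of "\<lambda>\<delta>. \<beta> \<bullet> coweight \<delta>"]
      by (simp add: inner_height_vector_eq)
    then show False using eq_zero_if_coweights_zero root_nonzero assms(1) by blast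
  qed
  ultimately show ?thesis by simp
qed

lemma root_height_neg:
  assumes "\<beta> \<in> R" "\<forall>\<delta>\<in>\<Delta>. \<beta> \<bullet> coweight \<delta> \<le> 0" shows "\<beta> \<bullet> height_vector < 0"
proof -
  have "\<forall>\<delta>\<in>\<Delta>. 0 \<le> (- \<beta>) \<bullet> coweight \<delta>" using assms(2) by simp
  then have "0 < (- \<beta>) \<bullet> height_vector" by (rule root_height_pos[OF uminus_root[OF assms(1)]])
  then show ?thesis by simp
qed

lemma root_height_nonzero:
  assumes "\<beta> \<in> R" shows "\<beta> \<bullet> height_vector \<noteq> 0"
proof (cases "\<forall>\<delta>\<in>\<Delta>. 0 \<le> \<beta> \<bullet> coweight \<delta>")
  case True
  then show ?thesis using root_height_pos[OF assms] by simp
next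
  case False
  then have "\<forall>\<delta>\<in>\<Delta>. \<beta> \<bullet> coweight \<delta> \<le> 0" using root_coweight_sign[OF assms] by blast
  then show ?thesis using root_height_neg[OF assms] by simp
qed

lemma positive_root_coweight_nonneg:
  assumes "\<beta> \<in> R" "0 < \<beta> \<bullet> height_vector" "\<delta> \<in> \<Delta>" shows "0 \<le> \<beta> \<bullet> coweight \<delta>"
proof (rule ccontr)
  assume "\<not> 0 \<le> \<beta> \<bullet> coweight \<delta>"
  then have "\<not> (\<forall>\<delta>\<in>\<Delta>. 0 \<le> \<beta> \<bullet> coweight \<delta>)" using assms(3) by blast
  then have "\<forall>\<delta>\<in>\<Delta>. \<beta> \<bullet> coweight \<delta> \<le> 0" using root_coweight_sign[OF assms(1)] by blast
  then show False using root_height_neg[OF assms(1)] assms(2) by simp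
qed

lemma closed_chamber: "closed (chamber \<Delta>)"
  unfolding chamber_def Collect_ball_eq by (intro closed_INT ballI closed_halfspace_ge)

lemma pos_cone_chamber: "pos_cone (chamber \<Delta>)"
  by (simp add: pos_cone_def chamber_def)

lemma chamber_inner_nonneg: "u \<in> chamber \<Delta> \<Longrightarrow> \<alpha> \<in> \<Delta> \<Longrightarrow> 0 \<le> \<alpha> \<bullet> u"
  by (simp add: chamber_def)

lemma positive_root_chamber_nonneg:
  assumes "\<beta> \<in> R" "0 < \<beta> \<bullet> height_vector" "u \<in> chamber \<Delta>" shows "0 \<le> \<beta> \<bullet> u"
proof -
  have "0 \<le> (\<Sum>\<delta>\<in>\<Delta>. (\<beta> \<bullet> coweight \<delta>) * (\<delta> \<bullet> u))"
    using positive_root_coweight_nonneg[OF assms(1,2)] assms(3)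
    by (intro sum_nonneg) (simp add: chamber_def)
  then show ?thesis by (simp only: inner_coweight_expansion[symmetric])
qed

lemma negative_root_chamber_nonpos:
  "\<beta> \<in> R \<Longrightarrow> \<beta> \<bullet> height_vector < 0 \<Longrightarrow> u \<in> chamber \<Delta> \<Longrightarrow> \<beta> \<bullet> u \<le> 0"
  using positive_root_chamber_nonneg[of "- \<beta>" u] uminus_root by auto

lemma height_vector_chamber: "height_vector \<in> chamber \<Delta>"
  by (simp add: chamber_def inner_height_vector)

lemma orthogonal_transformation_weyl: "w \<in> weyl R \<Longrightarrow> orthogonal_transformation w"
proof (induction rule: weyl.induct)
  case weyl_id
  then show ?case by (simp add: id_def)
next
  case (weyl_step \<alpha> w)
  then show ?case
    using orthogonal_transformation_compose orthogonal_transformation_refl root_nonzero by blast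
qed

lemma linear_weyl: "w \<in> weyl R \<Longrightarrow> linear w"
  using orthogonal_transformation_weyl orthogonal_transformation_linear by blast

lemma inner_weyl: "w \<in> weyl R \<Longrightarrow> w x \<bullet> w y = x \<bullet> y"
  using orthogonal_transformation_weyl orthogonal_transformation_def by blast

lemma weyl_root: "w \<in> weyl R \<Longrightarrow> \<beta> \<in> R \<Longrightarrow> w \<beta> \<in> R"
  by (induction rule: weyl.induct) (auto intro: refl_root)

lemma weyl_comp: "w1 \<in> weyl R \<Longrightarrow> w2 \<in> weyl R \<Longrightarrow> w1 \<circ> w2 \<in> weyl R"
proof (induction rule: weyl.induct)
  case weyl_id
  then show ?case by simp
next
  case (weyl_step \<alpha> w)
  then have "refl \<alpha> \<circ> (w \<circ> w2) \<in> weyl R" by (blast intro: weyl.weyl_step)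
  then show ?case by (simp only: comp_assoc)
qed

lemma refl_weyl: "\<alpha> \<in> R \<Longrightarrow> refl \<alpha> \<in> weyl R"
  using weyl.weyl_step[OF _ weyl.weyl_id, of \<alpha> R] by simp

lemma weyl_inverse: "w \<in> weyl R \<Longrightarrow> \<exists>w'\<in>weyl R. w' \<circ> w = id \<and> w \<circ> w' = id"
proof (induction rule: weyl.induct)
  case weyl_id
  have "id \<circ> id = id" by simp
  then show ?case using weyl.weyl_id by blast
next
  case (weyl_step \<alpha> w)
  then obtain w' where w': "w' \<in> weyl R" "w' \<circ> w = id" "w \<circ> w' = id" by blast
  have "w' \<circ> refl \<alpha> \<in> weyl R" using weyl_comp[OF w'(1) refl_weyl[OF weyl_step.hyps(1)]] .
  moreover have "w' (w x) = x" "w (w' x) = x" for x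
    using fun_cong[OF w'(2), of x] fun_cong[OF w'(3), of x] by simp_all
  then have "(w' \<circ> refl \<alpha>) \<circ> (refl \<alpha> \<circ> w) = id" "(refl \<alpha> \<circ> w) \<circ> (w' \<circ> refl \<alpha>) = id"
    using root_nonzero[OF weyl_step.hyps(1)] by (simp_all add: fun_eq_iff refl_refl)
  ultimately show ?case by blast
qed

lemma refl_word_weyl: "set as \<subseteq> R \<Longrightarrow> refl_word as \<in> weyl R"
proof (induction as)
  case Nil
  then show ?case using weyl.weyl_id by (simp only: refl_word.simps)
next
  case (Cons a as)
  then have "a \<in> R" "refl_word as \<in> weyl R" by auto
  then show ?case unfolding refl_word.simps by (rule weyl.weyl_step)
qed

lemma finite_weyl: "finite (weyl R)"
proof -
  have inj: "inj_on (\<lambda>w. restrict w R) (weyl R)"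
  proof (rule inj_onI)
    fix w1 w2 assume w: "w1 \<in> weyl R" "w2 \<in> weyl R" and eq: "restrict w1 R = restrict w2 R"
    show "w1 = w2"
    proof
      fix x
      have "x \<in> span R" using span_roots by simp
      moreover have "w1 y = w2 y" if "y \<in> R" for y
        using fun_cong[OF eq, of y] that by simp
      ultimately show "w1 x = w2 x"
        using linear_eq_on[OF linear_weyl[OF w(1)] linear_weyl[OF w(2)]] by blast
    qed
  qed
  have "(\<lambda>w. restrict w R) ` weyl R \<subseteq> R \<rightarrow>\<^sub>E R"
    by (rule image_subsetI) (simp add: restrict_PiE_iff weyl_root)
  moreover have "finite (R \<rightarrow>\<^sub>E R)" using finite_roots by (simp add: finite_PiE)
  ultimately have "finite ((\<lambda>w. restrict w R) ` weyl R)" by (rule finite_subset)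
  then show ?thesis by (rule finite_imageD[OF _ inj])
qed

lemma linear_eq_id_if_fixes_chamber:
  assumes "linear w" "\<And>u. u \<in> chamber \<Delta> \<Longrightarrow> w u = u" shows "w = id"
proof
  fix x
  define t where "t = (\<Sum>\<alpha>\<in>\<Delta>. \<bar>\<alpha> \<bullet> x\<bar>)"
  have "x + t *\<^sub>R height_vector \<in> chamber \<Delta>"
    unfolding chamber_def
  proof safe
    fix \<alpha> assume \<alpha>: "\<alpha> \<in> \<Delta>"
    have "\<bar>\<alpha> \<bullet> x\<bar> \<le> t" unfolding t_def using \<alpha> finite_simple by (intro member_le_sum) auto
    then show "0 \<le> \<alpha> \<bullet> (x + t *\<^sub>R height_vector)"
      using \<alpha> by (simp add: inner_add_right inner_height_vector)
  qed
  then have "w (x + t *\<^sub>R height_vector) = x + t *\<^sub>R height_vector" using assms(2) by blast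
  moreover have "w height_vector = height_vector" using assms(2) height_vector_chamber by blast
  ultimately show "w x = id x" using assms(1) by (simp add: linear_add linear_scale)
qed

section \<open>Simple roots and the chamber\<close>

lemma simple_roots_obtuse:
  assumes a: "\<alpha> \<in> \<Delta>" and b: "\<beta> \<in> \<Delta>" and ne: "\<alpha> \<noteq> \<beta>" shows "\<alpha> \<bullet> \<beta> \<le> 0"
proof (rule ccontr)
  assume "\<not> \<alpha> \<bullet> \<beta> \<le> 0"
  then have pos: "\<alpha> \<bullet> \<beta> > 0" by simp
  define k where "k = 2 * (\<alpha> \<bullet> \<beta>) / (\<alpha> \<bullet> \<alpha>)"
  have aa: "\<alpha> \<bullet> \<alpha> > 0" using simple_nonzero a by simp
  have k: "k > 0" unfolding k_def using pos aa by simp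
  have g: "refl \<alpha> \<beta> \<in> R" using refl_root a b simple_subset_roots by auto
  have eq: "refl \<alpha> \<beta> = \<beta> - k *\<^sub>R \<alpha>" by (simp add: refl_def k_def)
  have c1: "refl \<alpha> \<beta> \<bullet> coweight \<beta> = 1" unfolding eq
    using a b ne by (simp add: inner_diff_left inner_coweight)
  have c2: "refl \<alpha> \<beta> \<bullet> coweight \<alpha> = - k" unfolding eq
    using a b ne by (simp add: inner_diff_left inner_coweight)
  show False using root_coweight_sign[OF g] c1 c2 k a b by force
qed

lemma simple_combinations_obtuse:
  assumes "N \<subseteq> \<Delta>" "M \<subseteq> \<Delta>" "N \<inter> M = {}" "\<forall>\<eta>\<in>N. 0 \<le> a \<eta>" "\<forall>\<epsilon>\<in>M. 0 \<le> b \<epsilon>"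
  shows "(\<Sum>\<eta>\<in>N. a \<eta> *\<^sub>R \<eta>) \<bullet> (\<Sum>\<epsilon>\<in>M. b \<epsilon> *\<^sub>R \<epsilon>) \<le> 0"
proof -
  have "\<eta> \<bullet> (\<Sum>\<epsilon>\<in>M. b \<epsilon> *\<^sub>R \<epsilon>) \<le> 0" if \<eta>: "\<eta> \<in> N" for \<eta>
    unfolding inner_sum_right inner_scaleR_right
  proof (rule sum_nonpos)
    fix \<epsilon> assume \<epsilon>: "\<epsilon> \<in> M"
    have "\<eta> \<bullet> \<epsilon> \<le> 0" using simple_roots_obtuse \<eta> \<epsilon> assms(1-3) by blast
    then show "b \<epsilon> * (\<eta> \<bullet> \<epsilon>) \<le> 0" using \<epsilon> assms(5) by (simp add: mult_nonneg_nonpos)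
  qed
  then show ?thesis
    unfolding inner_sum_left inner_scaleR_left using assms(4)
    by (intro sum_nonpos) (simp add: mult_nonneg_nonpos)
qed

text \<open>Write \<open>x = z - y\<close> with \<open>y\<close>, \<open>z\<close> the negative and positive parts of \<open>x\<close> along \<open>\<Delta>\<close>.
  Then \<open>0 \<le> y \<bullet> x\<close> as \<open>x\<close> lies in the chamber and \<open>y \<bullet> z \<le> 0\<close> by obtuseness, so \<open>y = 0\<close>.\<close>

lemma chamber_coweight_nonneg:
  assumes x: "x \<in> chamber \<Delta>" and \<delta>: "\<delta> \<in> \<Delta>" shows "0 \<le> x \<bullet> coweight \<delta>"
proof -
  define c where "c = (\<lambda>\<eta>. x \<bullet> coweight \<eta>)"
  define N where "N = {\<eta>\<in>\<Delta>. c \<eta> < 0}"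
  define y where "y = (\<Sum>\<eta>\<in>N. (- c \<eta>) *\<^sub>R \<eta>)"
  define z where "z = (\<Sum>\<eta>\<in>\<Delta> - N. c \<eta> *\<^sub>R \<eta>)"
  have N: "N \<subseteq> \<Delta>" "finite N" using finite_subset[OF _ finite_simple] unfolding N_def by auto
  have "x = (\<Sum>\<eta>\<in>\<Delta>. c \<eta> *\<^sub>R \<eta>)" unfolding c_def by (simp only: coweight_expansion)
  also have "\<dots> = z - y"
    unfolding y_def z_def using sum.subset_diff[OF N(1) finite_simple, of "\<lambda>\<eta>. c \<eta> *\<^sub>R \<eta>"]
    by (simp add: sum_negf)
  finally have "y = z - x" by simp
  moreover have "y \<bullet> z \<le> 0"
    unfolding y_def z_def by (rule simple_combinations_obtuse) (auto simp: N_def)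
  moreover have "0 \<le> y \<bullet> x"
    unfolding y_def using chamber_inner_nonneg[OF x] N(1)
    by (auto simp: inner_sum_left N_def intro!: sum_nonneg mult_nonpos_nonneg)
  ultimately have "y \<bullet> y \<le> 0" by (simp add: inner_diff_right)
  then have "y \<bullet> y = 0" using inner_ge_zero[of y] by linarith
  then have y0: "y = 0" by simp
  show ?thesis
  proof (rule ccontr)
    assume "\<not> 0 \<le> x \<bullet> coweight \<delta>"
    then have \<delta>N: "\<delta> \<in> N" unfolding N_def c_def using \<delta> by auto
    have "y \<bullet> coweight \<delta> = (\<Sum>\<eta>\<in>N. if \<eta> = \<delta> then - c \<eta> else 0)"
      unfolding y_def inner_sum_left
      by (rule sum.cong) (use N(1) in \<open>auto simp: inner_coweight\<close>)
    also have "\<dots> = - c \<delta>" using N(2) \<delta>N by simp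
    finally show False using y0 \<delta>N unfolding N_def by simp
  qed
qed

lemma chamber_coweight_pos:
  assumes d: "d \<in> chamber \<Delta>" and \<gamma>: "\<gamma> \<in> \<Delta>" and pos: "0 < \<gamma> \<bullet> d" shows "0 < d \<bullet> coweight \<gamma>"
proof (rule ccontr)
  assume "\<not> 0 < d \<bullet> coweight \<gamma>"
  then have "(d \<bullet> coweight \<gamma>) * (\<gamma> \<bullet> \<gamma>) \<le> 0" by (simp add: mult_nonpos_nonneg)
  moreover have "(\<Sum>\<delta>\<in>\<Delta> - {\<gamma>}. (d \<bullet> coweight \<delta>) * (\<delta> \<bullet> \<gamma>)) \<le> 0"
    using chamber_coweight_nonneg[OF d] simple_roots_obtuse[OF _ \<gamma>]
    by (auto intro!: sum_nonpos mult_nonneg_nonpos)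
  ultimately have "d \<bullet> \<gamma> \<le> 0"
    using inner_coweight_expansion[of d \<gamma>]
      sum.remove[OF finite_simple \<gamma>, of "\<lambda>\<delta>. (d \<bullet> coweight \<delta>) * (\<delta> \<bullet> \<gamma>)"] by linarith
  then show False using pos by (simp add: inner_commute)
qed

lemma coweight_single_expansion:
  assumes a: "\<alpha> \<in> \<Delta>" and z: "\<And>\<delta>. \<delta> \<in> \<Delta> \<Longrightarrow> \<delta> \<noteq> \<alpha> \<Longrightarrow> x \<bullet> coweight \<delta> = 0"
  shows "x = (x \<bullet> coweight \<alpha>) *\<^sub>R \<alpha>"
proof -
  have "x = (\<Sum>\<delta>\<in>\<Delta>. (x \<bullet> coweight \<delta>) *\<^sub>R \<delta>)" by (simp only: coweight_expansion)
  also have "\<dots> = (\<Sum>\<delta>\<in>\<Delta>. if \<delta> = \<alpha> then (x \<bullet> coweight \<alpha>) *\<^sub>R \<alpha> else 0)"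
    by (rule sum.cong) (auto simp: z)
  also have "\<dots> = (x \<bullet> coweight \<alpha>) *\<^sub>R \<alpha>" using a finite_simple by simp
  finally show ?thesis .
qed

lemma refl_simple_positive_root:
  assumes a: "\<alpha> \<in> \<Delta>" and b: "\<beta> \<in> R" and bp: "\<beta> \<bullet> height_vector > 0" and np: "\<And>c. \<beta> \<noteq> c *\<^sub>R \<alpha>"
  shows "refl \<alpha> \<beta> \<bullet> height_vector > 0"
proof -
  obtain \<gamma> where g: "\<gamma> \<in> \<Delta>" "\<gamma> \<noteq> \<alpha>" "\<beta> \<bullet> coweight \<gamma> > 0"
  proof (rule ccontr)
    assume "\<not> thesis"
    then have "\<And>\<gamma>. \<gamma> \<in> \<Delta> \<Longrightarrow> \<gamma> \<noteq> \<alpha> \<Longrightarrow> \<beta> \<bullet> coweight \<gamma> = 0"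
      using that positive_root_coweight_nonneg[OF b bp] by force
    then have "\<beta> = (\<beta> \<bullet> coweight \<alpha>) *\<^sub>R \<alpha>" using coweight_single_expansion[OF a] by blast
    then show False using np by blast
  qed
  have r: "refl \<alpha> \<beta> \<in> R" using refl_root a b simple_subset_roots by auto
  have "refl \<alpha> \<beta> \<bullet> coweight \<gamma> = \<beta> \<bullet> coweight \<gamma>"
    using g a by (simp add: refl_def inner_diff_left inner_coweight)
  then have "refl \<alpha> \<beta> \<bullet> coweight \<gamma> > 0" using g by simp
  then have "\<forall>\<delta>\<in>\<Delta>. 0 \<le> refl \<alpha> \<beta> \<bullet> coweight \<delta>" using root_coweight_sign[OF r] g(1) by force
  then show ?thesis by (rule root_height_pos[OF r])
qed

lemma positive_root_inner_simple_pos: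
  assumes "\<beta> \<in> R" "0 < \<beta> \<bullet> height_vector" shows "\<exists>\<alpha>\<in>\<Delta>. 0 < \<alpha> \<bullet> \<beta>"
proof (rule ccontr)
  assume "\<not> (\<exists>\<alpha>\<in>\<Delta>. 0 < \<alpha> \<bullet> \<beta>)"
  then have "(\<beta> \<bullet> coweight \<delta>) * (\<delta> \<bullet> \<beta>) \<le> 0" if "\<delta> \<in> \<Delta>" for \<delta>
    using positive_root_coweight_nonneg[OF assms that] that
    by (simp add: mult_nonneg_nonpos not_less)
  then have "\<beta> \<bullet> \<beta> \<le> 0" using inner_coweight_expansion[of \<beta> \<beta>] by (simp add: sum_nonpos)
  moreover have "0 < \<beta> \<bullet> \<beta>" using root_nonzero[OF assms(1)] by simp
  ultimately show False by linarith
qed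

lemma card_lower_roots_less:
  assumes "\<beta>' \<in> R" "\<beta>' \<bullet> height_vector < \<beta> \<bullet> height_vector"
  shows "card {\<gamma>\<in>R. \<gamma> \<bullet> height_vector < \<beta>' \<bullet> height_vector}
           < card {\<gamma>\<in>R. \<gamma> \<bullet> height_vector < \<beta> \<bullet> height_vector}"
proof (rule psubset_card_mono)
  show "finite {\<gamma>\<in>R. \<gamma> \<bullet> height_vector < \<beta> \<bullet> height_vector}" using finite_roots by simp
  show "{\<gamma>\<in>R. \<gamma> \<bullet> height_vector < \<beta>' \<bullet> height_vector}
          \<subset> {\<gamma>\<in>R. \<gamma> \<bullet> height_vector < \<beta> \<bullet> height_vector}"
    using assms by auto
qed

text \<open>Reflecting a positive root \<open>\<beta>\<close> in a simple root \<open>\<alpha>\<close> with \<open>0 < \<alpha> \<bullet> \<beta>\<close> lowers its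
  height and, unless \<open>\<beta>\<close> is a multiple of \<open>\<alpha>\<close>, keeps it positive.\<close>

lemma positive_root_conj_simple:
  "\<beta> \<in> R \<Longrightarrow> 0 < \<beta> \<bullet> height_vector \<Longrightarrow>
     \<exists>ls \<alpha> c. set ls \<subseteq> \<Delta> \<and> \<alpha> \<in> \<Delta> \<and> c \<noteq> 0 \<and> \<beta> = refl_word ls (c *\<^sub>R \<alpha>)"
proof (induction "card {\<gamma>\<in>R. \<gamma> \<bullet> height_vector < \<beta> \<bullet> height_vector}" arbitrary: \<beta> rule: less_induct)
  case less
  show ?case
  proof (cases "\<exists>\<alpha>\<in>\<Delta>. \<exists>c. \<beta> = c *\<^sub>R \<alpha>")
    case True
    then obtain \<alpha> c where \<alpha>: "\<alpha> \<in> \<Delta>" "\<beta> = c *\<^sub>R \<alpha>" by blast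
    then have "c \<noteq> 0" using root_nonzero less.prems by auto
    then have "set [] \<subseteq> \<Delta> \<and> \<alpha> \<in> \<Delta> \<and> c \<noteq> 0 \<and> \<beta> = refl_word [] (c *\<^sub>R \<alpha>)" using \<alpha> by simp
    then show ?thesis by blast
  next
    case False
    obtain \<alpha> where \<alpha>: "\<alpha> \<in> \<Delta>" "0 < \<alpha> \<bullet> \<beta>"
      using positive_root_inner_simple_pos[OF less.prems] by blast
    define \<beta>' where "\<beta>' = refl \<alpha> \<beta>"
    have root: "\<beta>' \<in> R" unfolding \<beta>'_def using refl_root simple_root \<alpha>(1) less.prems(1) by blast
    have pos: "0 < \<beta>' \<bullet> height_vector" unfolding \<beta>'_def
      using refl_simple_positive_root[OF \<alpha>(1) less.prems] False \<alpha>(1) by blast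
    have "0 < 2 * (\<alpha> \<bullet> \<beta>) / (\<alpha> \<bullet> \<alpha>)" using \<alpha> simple_nonzero by simp
    then have "\<beta>' \<bullet> height_vector < \<beta> \<bullet> height_vector"
      unfolding \<beta>'_def using \<alpha>(1) by (simp add: inner_refl_left inner_height_vector)
    then obtain ls \<alpha>' c where ih: "set ls \<subseteq> \<Delta>" "\<alpha>' \<in> \<Delta>" "c \<noteq> 0" "\<beta>' = refl_word ls (c *\<^sub>R \<alpha>')"
      using less.hyps[OF card_lower_roots_less[OF root] root pos] by blast
    have "\<beta> = refl \<alpha> \<beta>'" unfolding \<beta>'_def using simple_nonzero[OF \<alpha>(1)] by (simp add: refl_refl)
    then have "\<beta> = refl_word (\<alpha> # ls) (c *\<^sub>R \<alpha>')" using ih(4) by simp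
    then show ?thesis using ih(1-3) \<alpha>(1) by (intro exI[of _ "\<alpha> # ls"]) auto
  qed
qed

lemma refl_positive_root_word:
  assumes b: "\<beta> \<in> R" "\<beta> \<bullet> height_vector > 0" shows "\<exists>ls. set ls \<subseteq> \<Delta> \<and> refl \<beta> = refl_word ls"
proof -
  obtain ls \<alpha> c where c: "set ls \<subseteq> \<Delta>" "\<alpha> \<in> \<Delta>" "c \<noteq> 0" "\<beta> = refl_word ls (c *\<^sub>R \<alpha>)"
    using positive_root_conj_simple[OF b] by blast
  define v where "v = refl_word ls"
  have z: "0 \<notin> set ls" using c(1) simple_nonzero by auto
  have iv: "orthogonal_transformation v" unfolding v_def
    using orthogonal_transformation_refl_word[OF z] .
  have bv: "\<beta> = c *\<^sub>R v \<alpha>"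
    using c(4) linear_scale[OF orthogonal_transformation_linear[OF iv]] unfolding v_def by simp
  have rb: "refl \<beta> = refl (v \<alpha>)" unfolding bv by (rule refl_scaleR[OF c(3)])
  have vinv: "\<And>x. v (refl_word (rev ls) x) = x" using refl_word_rev[OF z] unfolding v_def by simp
  have "refl \<beta> = refl_word (ls @ \<alpha> # rev ls)"
  proof
    fix x
    have "refl \<beta> x = refl (v \<alpha>) (v (refl_word (rev ls) x))" using rb vinv by simp
    also have "\<dots> = v (refl \<alpha> (refl_word (rev ls) x))"
      using orthogonal_transformation_refl_conj[OF iv] by simp
    also have "\<dots> = refl_word (ls @ \<alpha> # rev ls) x" unfolding v_def by (simp add: refl_word_append)
    finally show "refl \<beta> x = refl_word (ls @ \<alpha> # rev ls) x" .
  qed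
  then show ?thesis using c(1,2) by (intro exI[of _ "ls @ \<alpha> # rev ls"]) auto
qed

lemma refl_root_word:
  assumes b: "\<beta> \<in> R" shows "\<exists>ls. set ls \<subseteq> \<Delta> \<and> refl \<beta> = refl_word ls"
proof (cases "\<beta> \<bullet> height_vector > 0")
  case True then show ?thesis using refl_positive_root_word[OF b] by blast
next
  case False
  then have "(- \<beta>) \<bullet> height_vector > 0" using root_height_nonzero[OF b] by auto
  moreover have "- \<beta> \<in> R" using uminus_root[OF b] .
  ultimately obtain ls where "set ls \<subseteq> \<Delta>" "refl (- \<beta>) = refl_word ls"
    using refl_positive_root_word by blast
  then show ?thesis using refl_scaleR[of "-1" \<beta>] by (intro exI[of _ ls]) simp
qed

lemma weyl_simple_word: "w \<in> weyl R \<Longrightarrow> \<exists>ls. set ls \<subseteq> \<Delta> \<and> w = refl_word ls"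
proof (induction rule: weyl.induct)
  case weyl_id
  have "set [] \<subseteq> \<Delta> \<and> id = refl_word []" by simp
  then show ?case by blast
next
  case (weyl_step \<beta> w)
  obtain ls where ls: "set ls \<subseteq> \<Delta>" "w = refl_word ls" using weyl_step.IH by blast
  obtain ls' where ls': "set ls' \<subseteq> \<Delta>" "refl \<beta> = refl_word ls'"
    using refl_root_word[OF weyl_step.hyps(1)] by blast
  have "set (ls' @ ls) \<subseteq> \<Delta> \<and> refl \<beta> \<circ> w = refl_word (ls' @ ls)"
    using ls ls' by (simp add: refl_word_append)
  then show ?case by blast
qed

lemma simple_word_root: "set as \<subseteq> \<Delta> \<Longrightarrow> \<beta> \<in> R \<Longrightarrow> refl_word as \<beta> \<in> R"
  using refl_word_weyl[of as] weyl_root simple_subset_roots by blast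

text \<open>Follow \<open>\<beta>\<close> along the word: where it turns negative it is a multiple of the simple
  root applied at that step, and the two reflections cancel.\<close>

lemma exchange_condition:
  "set as \<subseteq> \<Delta> \<Longrightarrow> \<beta> \<in> R \<Longrightarrow> \<beta> \<bullet> height_vector > 0 \<Longrightarrow> refl_word as \<beta> \<bullet> height_vector < 0 \<Longrightarrow>
    \<exists>as'. set as' \<subseteq> \<Delta> \<and> length as' + 1 = length as \<and> refl_word as \<circ> refl \<beta> = refl_word as'"
proof (induction as)
  case Nil then show ?case by simp
next
  case (Cons a as0)
  have a: "a \<in> \<Delta>" and s0: "set as0 \<subseteq> \<Delta>" using Cons.prems by auto
  define \<gamma> where "\<gamma> = refl_word as0 \<beta>"
  have gR: "\<gamma> \<in> R" unfolding \<gamma>_def using simple_word_root[OF s0 Cons.prems(2)] .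
  show ?case
  proof (cases "\<gamma> \<bullet> height_vector < 0")
    case True
    then obtain as0' where h: "set as0' \<subseteq> \<Delta>" "length as0' + 1 = length as0"
      "refl_word as0 \<circ> refl \<beta> = refl_word as0'"
      using Cons.IH[OF s0 Cons.prems(2,3)] unfolding \<gamma>_def by blast
    have "refl_word (a # as0) \<circ> refl \<beta> = refl a \<circ> (refl_word as0 \<circ> refl \<beta>)"
      by (simp only: refl_word.simps comp_assoc)
    also have "\<dots> = refl_word (a # as0')" using h(3) by simp
    finally have "refl_word (a # as0) \<circ> refl \<beta> = refl_word (a # as0')" .
    moreover have "set (a # as0') \<subseteq> \<Delta> \<and> length (a # as0') + 1 = length (a # as0)" using h a by simp
    ultimately show ?thesis by blast
  next
    case False
    then have gp: "\<gamma> \<bullet> height_vector > 0" using root_height_nonzero[OF gR] by auto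
    have "refl a \<gamma> \<bullet> height_vector < 0" using Cons.prems(4) unfolding \<gamma>_def by simp
    then obtain c where gc: "\<gamma> = c *\<^sub>R a" using refl_simple_positive_root[OF a gR gp] by force
    have c0: "c \<noteq> 0" using gc root_nonzero[OF gR] by auto
    have rg: "refl \<gamma> = refl a" unfolding gc using refl_scaleR[OF c0] .
    have z: "0 \<notin> set as0" using s0 simple_nonzero by auto
    have "refl_word as0 \<circ> refl \<beta> = refl \<gamma> \<circ> refl_word as0"
      unfolding \<gamma>_def
      using orthogonal_transformation_refl_conj[OF orthogonal_transformation_refl_word[OF z]]
      by auto
    then have "refl_word (a # as0) \<circ> refl \<beta> = refl a \<circ> refl a \<circ> refl_word as0"
      by (simp add: rg comp_assoc)
    also have "\<dots> = refl_word as0" using simple_nonzero[OF a] by (simp add: fun_eq_iff refl_refl)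
    finally have "refl_word (a # as0) \<circ> refl \<beta> = refl_word as0" .
    moreover have "set as0 \<subseteq> \<Delta> \<and> length as0 + 1 = length (a # as0)" using s0 by simp
    ultimately show ?thesis by blast
  qed
qed

lemma reduced_word_last_negative:
  assumes s: "set (as @ [\<alpha>]) \<subseteq> \<Delta>"
    and reduced: "\<not> (\<exists>ls'. set ls' \<subseteq> \<Delta> \<and> length ls' < length (as @ [\<alpha>]) \<and>
                          refl_word ls' = refl_word (as @ [\<alpha>]))"
  shows "refl_word (as @ [\<alpha>]) \<alpha> \<bullet> height_vector < 0"
proof (rule ccontr)
  have \<alpha>: "\<alpha> \<in> \<Delta>" and sa: "set as \<subseteq> \<Delta>" using s by auto
  have root: "refl_word (as @ [\<alpha>]) \<alpha> \<in> R" using simple_word_root[OF s simple_root[OF \<alpha>]] .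
  have "refl_word (as @ [\<alpha>]) \<alpha> = - refl_word as \<alpha>"
    using refl_self[OF simple_nonzero[OF \<alpha>]] sa simple_nonzero
      linear_neg[OF orthogonal_transformation_linear[OF orthogonal_transformation_refl_word]]
    by (auto simp: refl_word_append)
  moreover assume "\<not> refl_word (as @ [\<alpha>]) \<alpha> \<bullet> height_vector < 0"
  ultimately have "refl_word as \<alpha> \<bullet> height_vector < 0" using root_height_nonzero[OF root] by auto
  then obtain as' where
    "set as' \<subseteq> \<Delta>" "length as' + 1 = length as" "refl_word as \<circ> refl \<alpha> = refl_word as'"
    using exchange_condition[OF sa simple_root[OF \<alpha>]] inner_height_vector[OF \<alpha>] by auto
  then have "set as' \<subseteq> \<Delta> \<and> length as' < length (as @ [\<alpha>]) \<and> refl_word as' = refl_word (as @ [\<alpha>])"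
    by (simp add: refl_word_append)
  then show False using reduced by blast
qed

lemma refl_word_chamber_fixed:
  "set ls \<subseteq> \<Delta> \<Longrightarrow> u \<in> chamber \<Delta> \<Longrightarrow> refl_word ls u \<in> chamber \<Delta> \<Longrightarrow> refl_word ls u = u"
proof (induction ls arbitrary: u rule: length_induct)
  case (1 ls)
  show ?case
  proof (cases "\<exists>ls'. set ls' \<subseteq> \<Delta> \<and> length ls' < length ls \<and> refl_word ls' = refl_word ls")
    case True
    then show ?thesis using "1.IH" "1.prems" by metis
  next
    case reduced: False
    show ?thesis
    proof (cases ls rule: rev_exhaust)
      case Nil
      then show ?thesis by simp
    next
      case (snoc as \<alpha>)
      have \<alpha>: "\<alpha> \<in> \<Delta>" and sa: "set as \<subseteq> \<Delta>" using "1.prems"(1) snoc by auto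
      have root: "refl_word ls \<alpha> \<in> R" using simple_word_root[OF "1.prems"(1) simple_root[OF \<alpha>]] .
      have "refl_word ls \<alpha> \<bullet> height_vector < 0"
        using reduced_word_last_negative "1.prems"(1) reduced unfolding snoc by blast
      then have "refl_word ls \<alpha> \<bullet> refl_word ls u \<le> 0"
        using negative_root_chamber_nonpos[OF root _ "1.prems"(3)] by blast
      moreover have "orthogonal_transformation (refl_word ls)"
        using orthogonal_transformation_refl_word "1.prems"(1) simple_nonzero by blast
      ultimately have "\<alpha> \<bullet> u \<le> 0" by (simp add: orthogonal_transformation_def)
      then have "refl \<alpha> u = u"
        using chamber_inner_nonneg[OF "1.prems"(2) \<alpha>] by (simp add: refl_fixed)
      then have "refl_word ls u = refl_word as u" using snoc by (simp add: refl_word_append)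
      moreover have "refl_word as u = u" using "1.IH" sa "1.prems"(2,3) snoc calculation by simp
      ultimately show ?thesis by simp
    qed
  qed
qed

theorem weyl_chamber_fixed:
  assumes "w \<in> weyl R" "u \<in> chamber \<Delta>" "w u \<in> chamber \<Delta>" shows "w u = u"
  using weyl_simple_word[OF assms(1)] refl_word_chamber_fixed assms(2,3) by blast

lemma weyl_eq_id_if_preserves_chamber:
  assumes w: "w \<in> weyl R" and c: "\<And>u. u \<in> chamber \<Delta> \<Longrightarrow> w u \<in> chamber \<Delta>" shows "w = id"
  by (rule linear_eq_id_if_fixes_chamber[OF linear_weyl[OF w]]) (rule weyl_chamber_fixed[OF w _ c])

section \<open>The longest element and the opposition involution\<close>

text \<open>An element \<open>w\<close> maximising the height of \<open>w v\<close> works.\<close>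

lemma exists_weyl_dominant:
  assumes "G \<subseteq> weyl R" "id \<in> G" "A \<subseteq> \<Delta>"
    and step: "\<And>\<alpha> w. \<alpha> \<in> A \<Longrightarrow> w \<in> G \<Longrightarrow> refl \<alpha> \<circ> w \<in> G"
  shows "\<exists>w\<in>G. \<forall>\<alpha>\<in>A. 0 \<le> \<alpha> \<bullet> w v"
proof -
  have "finite G" using finite_subset[OF assms(1) finite_weyl] .
  then have "Max ((\<lambda>w. w v \<bullet> height_vector) ` G) \<in> (\<lambda>w. w v \<bullet> height_vector) ` G"
    using assms(2) by (intro Max_in) auto
  then obtain w where w: "w \<in> G" "w v \<bullet> height_vector = Max ((\<lambda>w. w v \<bullet> height_vector) ` G)"
    by auto
  have "0 \<le> \<alpha> \<bullet> w v" if \<alpha>: "\<alpha> \<in> A" for \<alpha>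
  proof -
    have \<alpha>_simple: "\<alpha> \<in> \<Delta>" using \<alpha> assms(3) by auto
    have "(refl \<alpha> \<circ> w) v \<bullet> height_vector \<in> (\<lambda>w. w v \<bullet> height_vector) ` G"
      using step[OF \<alpha> w(1)] by (rule imageI)
    then have "(refl \<alpha> \<circ> w) v \<bullet> height_vector \<le> w v \<bullet> height_vector"
      unfolding w(2) by (rule Max_ge[OF finite_imageI[OF \<open>finite G\<close>]])
    then have "refl \<alpha> (w v) \<bullet> height_vector \<le> w v \<bullet> height_vector" by simp
    then have "0 \<le> 2 * (\<alpha> \<bullet> w v) / (\<alpha> \<bullet> \<alpha>)"
      by (simp add: inner_refl_left inner_height_vector[OF \<alpha>_simple])
    moreover have "0 < \<alpha> \<bullet> \<alpha>" using simple_nonzero[OF \<alpha>_simple] by simp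
    ultimately show ?thesis by (simp add: zero_le_divide_iff)
  qed
  then show ?thesis using w(1) by blast
qed

lemma neg_weyl_chamber:
  assumes w: "w \<in> weyl R" and neg: "- w height_vector \<in> chamber \<Delta>" and u: "u \<in> chamber \<Delta>"
  shows "- w u \<in> chamber \<Delta>"
  unfolding chamber_def
proof safe
  fix \<alpha> assume \<alpha>: "\<alpha> \<in> \<Delta>"
  obtain w' where w': "w' \<in> weyl R" "w \<circ> w' = id" using weyl_inverse[OF w] by blast
  have \<alpha>_eq: "w (w' \<alpha>) = \<alpha>" using fun_cong[OF w'(2), of \<alpha>] by simp
  have root: "w' \<alpha> \<in> R" using weyl_root[OF w'(1) simple_root[OF \<alpha>]] .
  have "w' \<alpha> \<bullet> height_vector = \<alpha> \<bullet> w height_vector"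
    using inner_weyl[OF w, of "w' \<alpha>" height_vector] \<alpha>_eq by simp
  also have "\<dots> \<le> 0" using chamber_inner_nonneg[OF neg \<alpha>] by simp
  finally have "w' \<alpha> \<bullet> height_vector < 0" using root_height_nonzero[OF root] by linarith
  then have "w' \<alpha> \<bullet> u \<le> 0" using negative_root_chamber_nonpos[OF root _ u] by blast
  then show "0 \<le> \<alpha> \<bullet> - w u" using inner_weyl[OF w, of "w' \<alpha>" u] \<alpha>_eq by simp
qed

lemma exists_chamber_reversing: "\<exists>w\<in>weyl R. w ` chamber \<Delta> = uminus ` chamber \<Delta>"
proof -
  have "refl \<alpha> \<circ> w \<in> weyl R" if "\<alpha> \<in> \<Delta>" "w \<in> weyl R" for \<alpha> w
    using weyl.weyl_step[OF simple_root] that by blast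
  then obtain w where w: "w \<in> weyl R" "\<forall>\<alpha>\<in>\<Delta>. 0 \<le> \<alpha> \<bullet> w (- height_vector)"
    using exists_weyl_dominant[of "weyl R" \<Delta>] weyl.weyl_id by blast
  have lw: "linear w" using linear_weyl[OF w(1)] .
  have "- w height_vector \<in> chamber \<Delta>" using w(2) linear_neg[OF lw] by (simp add: chamber_def)
  then have rev: "- w u \<in> chamber \<Delta>" if "u \<in> chamber \<Delta>" for u
    using neg_weyl_chamber[OF w(1) _ that] by blast
  have "w \<circ> w = id"
  proof (rule weyl_eq_id_if_preserves_chamber[OF weyl_comp[OF w(1) w(1)]])
    fix u assume "u \<in> chamber \<Delta>"
    then show "(w \<circ> w) u \<in> chamber \<Delta>" using rev[OF rev] linear_neg[OF lw] by simp
  qed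
  then have ww: "w (w u) = u" for u by (metis comp_apply id_apply)
  have "w ` chamber \<Delta> = uminus ` chamber \<Delta>"
  proof (intro equalityI image_subsetI)
    fix u assume "u \<in> chamber \<Delta>"
    then show "w u \<in> uminus ` chamber \<Delta>" using rev by (intro image_eqI[of _ _ "- w u"]) simp_all
  next
    fix u assume "u \<in> chamber \<Delta>"
    moreover have "- u = w (- w u)" using ww linear_neg[OF lw] by simp
    ultimately show "- u \<in> w ` chamber \<Delta>" using rev by blast
  qed
  then show ?thesis using w(1) by blast
qed

lemma chamber_reversing_comp:
  assumes a: "a \<in> weyl R" "a ` chamber \<Delta> = uminus ` chamber \<Delta>"
    and b: "b \<in> weyl R" "b ` chamber \<Delta> = uminus ` chamber \<Delta>"
  shows "a \<circ> b = id"
proof (rule weyl_eq_id_if_preserves_chamber[OF weyl_comp[OF a(1) b(1)]])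
  fix u assume "u \<in> chamber \<Delta>"
  then obtain u' where u': "u' \<in> chamber \<Delta>" "b u = - u'" using b(2) by blast
  obtain u'' where u'': "u'' \<in> chamber \<Delta>" "a u' = - u''" using a(2) u'(1) by blast
  have "a (b u) = - a u'" using u'(2) linear_neg[OF linear_weyl[OF a(1)]] by simp
  then show "(a \<circ> b) u \<in> chamber \<Delta>" using u'' by simp
qed

lemma w0: "w0 R \<Delta> \<in> weyl R" "w0 R \<Delta> ` chamber \<Delta> = uminus ` chamber \<Delta>"
proof -
  have "\<exists>!w. w \<in> weyl R \<and> w ` chamber \<Delta> = uminus ` chamber \<Delta>"
  proof (rule ex_ex1I)
    show "\<exists>w. w \<in> weyl R \<and> w ` chamber \<Delta> = uminus ` chamber \<Delta>"
      using exists_chamber_reversing by blast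
  next
    fix a b assume a: "a \<in> weyl R \<and> a ` chamber \<Delta> = uminus ` chamber \<Delta>"
      and b: "b \<in> weyl R \<and> b ` chamber \<Delta> = uminus ` chamber \<Delta>"
    have "a = a \<circ> (b \<circ> b)" using chamber_reversing_comp b by simp
    also have "\<dots> = b" using chamber_reversing_comp[of a b] a b by (simp flip: comp_assoc)
    finally show "a = b" .
  qed
  then have "w0 R \<Delta> \<in> weyl R \<and> w0 R \<Delta> ` chamber \<Delta> = uminus ` chamber \<Delta>"
    unfolding w0_def by (rule theI')
  then show "w0 R \<Delta> \<in> weyl R" "w0 R \<Delta> ` chamber \<Delta> = uminus ` chamber \<Delta>" by auto
qed

lemma w0_w0: "w0 R \<Delta> (w0 R \<Delta> x) = x"
  using chamber_reversing_comp[OF w0 w0] by (metis comp_apply id_apply)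

abbreviation \<iota> :: "'a \<Rightarrow> 'a" where
  "\<iota> \<equiv> opp R \<Delta>"

lemma orthogonal_transformation_opp: "orthogonal_transformation \<iota>"
proof -
  have "\<iota> = (\<lambda>v. - w0 R \<Delta> v)" by (simp add: fun_eq_iff opp_def)
  then show ?thesis
    by (simp only: orthogonal_transformation_neg orthogonal_transformation_weyl[OF w0(1)])
qed

lemma linear_opp: "linear \<iota>"
  using orthogonal_transformation_opp orthogonal_transformation_linear by blast

lemma opp_opp: "\<iota> (\<iota> v) = v"
  unfolding opp_def using linear_neg[OF linear_weyl[OF w0(1)]] w0_w0 by simp

lemma inner_opp_commute: "\<iota> x \<bullet> y = x \<bullet> \<iota> y"
  using orthogonal_transformation_opp opp_opp unfolding orthogonal_transformation_def by metis

lemma opp_chamber: "u \<in> chamber \<Delta> \<Longrightarrow> \<iota> u \<in> chamber \<Delta>"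
  using w0(2) by (force simp: opp_def)

lemma opp_root: "\<beta> \<in> R \<Longrightarrow> \<iota> \<beta> \<in> R"
  unfolding opp_def using weyl_root[OF w0(1)] uminus_root by blast

lemma opp_positive_root:
  assumes "\<beta> \<in> R" "0 < \<beta> \<bullet> height_vector" shows "0 < \<iota> \<beta> \<bullet> height_vector"
proof -
  have "0 \<le> \<beta> \<bullet> \<iota> height_vector"
    using positive_root_chamber_nonneg[OF assms opp_chamber[OF height_vector_chamber]] .
  then show ?thesis using root_height_nonzero[OF opp_root[OF assms(1)]] inner_opp_commute by force
qed

end

section \<open>The subgroup \<open>W\<^sub>\<theta>\<close>\<close>

locale theta_base = root_base R \<Delta> for R :: "'a::euclidean_space set" and \<Delta> +
  fixes \<theta> :: "'a set"
  assumes theta_subset: "\<theta> \<subseteq> \<Delta>" and theta_nonempty: "\<theta> \<noteq> {}"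
    and theta_opp: "(\<lambda>\<alpha>. \<lambda>v. \<alpha> \<bullet> opp R \<Delta> v) ` \<theta> = (\<lambda>\<alpha>. \<lambda>v. \<alpha> \<bullet> v) ` \<theta>"
begin

abbreviation W\<^sub>\<theta> :: "('a \<Rightarrow> 'a) set" where
  "W\<^sub>\<theta> \<equiv> weyl_theta R \<Delta> \<theta>"

definition e\<^sub>\<theta> :: 'a where
  "e\<^sub>\<theta> = (SOME x. \<forall>\<alpha>\<in>\<Delta>. \<alpha> \<bullet> x = (if \<alpha> \<in> \<theta> then 1 else 0))"

lemma inner_e_theta: "\<alpha> \<in> \<Delta> \<Longrightarrow> \<alpha> \<bullet> e\<^sub>\<theta> = (if \<alpha> \<in> \<theta> then 1 else 0)"
  using someI_ex[OF independent_dual_vector[OF independent_simple,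
        of "\<lambda>\<alpha>. if \<alpha> \<in> \<theta> then 1 else 0"]]
  unfolding e\<^sub>\<theta>_def by blast

lemma e_theta_chamber: "e\<^sub>\<theta> \<in> chamber \<Delta>"
  by (simp add: chamber_def inner_e_theta)

lemma e_theta_a_theta: "e\<^sub>\<theta> \<in> a_theta \<Delta> \<theta>"
  by (simp add: a_theta_def inner_e_theta)

lemma opp_theta:
  assumes "\<alpha> \<in> \<theta>" shows "\<iota> \<alpha> \<in> \<theta>"
proof -
  obtain \<beta> where \<beta>: "\<beta> \<in> \<theta>" "(\<lambda>v. \<alpha> \<bullet> \<iota> v) = (\<lambda>v. \<beta> \<bullet> v)" using theta_opp assms by blast
  have "\<iota> \<alpha> \<bullet> v = \<beta> \<bullet> v" for v using inner_opp_commute fun_cong[OF \<beta>(2), of v] by simp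
  then have "\<iota> \<alpha> = \<beta>" using vector_eq_rdot by blast
  then show ?thesis using \<beta>(1) by simp
qed

text \<open>The vector \<open>y = \<iota> e\<^sub>\<theta> - e\<^sub>\<theta>\<close> lies in the chamber and satisfies \<open>\<iota> y = - y\<close>,
  so both \<open>y\<close> and \<open>-y\<close> lie in the chamber.\<close>

lemma opp_e_theta: "\<iota> e\<^sub>\<theta> = e\<^sub>\<theta>"
proof -
  define y where "y = \<iota> e\<^sub>\<theta> - e\<^sub>\<theta>"
  have y: "y \<in> chamber \<Delta>"
    unfolding chamber_def
  proof safe
    fix \<alpha> assume \<alpha>: "\<alpha> \<in> \<Delta>"
    show "0 \<le> \<alpha> \<bullet> y"
    proof (cases "\<alpha> \<in> \<theta>")
      case True
      have "\<alpha> \<bullet> \<iota> e\<^sub>\<theta> = \<iota> \<alpha> \<bullet> e\<^sub>\<theta>" by (simp add: inner_opp_commute)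
      also have "\<dots> = 1" using opp_theta[OF True] theta_subset inner_e_theta by auto
      finally have "\<alpha> \<bullet> \<iota> e\<^sub>\<theta> = 1" .
      then show ?thesis using \<alpha> True by (simp add: y_def inner_diff_right inner_e_theta)
    next
      case False
      then show ?thesis using \<alpha> chamber_inner_nonneg[OF opp_chamber[OF e_theta_chamber] \<alpha>]
        by (simp add: y_def inner_diff_right inner_e_theta)
    qed
  qed
  have "\<iota> y = - y" unfolding y_def using linear_diff[OF linear_opp] opp_opp by simp
  then have "- y \<in> chamber \<Delta>" using opp_chamber[OF y] by simp
  then have "y = 0"
    using y by (intro eq_zero_if_inner_simple_zero order.antisym) (auto simp: chamber_def)
  then show ?thesis by (simp add: y_def)
qed

text \<open>For \<open>\<alpha> \<in> \<Delta> - \<theta>\<close> the positive root \<open>\<iota> \<alpha>\<close> vanishes on \<open>e\<^sub>\<theta>\<close>, so its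
  coordinates along \<open>\<theta>\<close> vanish: \<open>\<iota> \<alpha>\<close> lies in the span of \<open>\<Delta> - \<theta>\<close>.\<close>

lemma opp_a_theta:
  assumes v: "v \<in> a_theta \<Delta> \<theta>" shows "\<iota> v \<in> a_theta \<Delta> \<theta>"
  unfolding a_theta_def
proof safe
  fix \<alpha> assume \<alpha>: "\<alpha> \<in> \<Delta>" "\<alpha> \<notin> \<theta>"
  define c where "c = (\<lambda>\<delta>. \<iota> \<alpha> \<bullet> coweight \<delta>)"
  have root: "\<iota> \<alpha> \<in> R" using opp_root[OF simple_root[OF \<alpha>(1)]] .
  have "0 < \<iota> \<alpha> \<bullet> height_vector"
    using opp_positive_root[OF simple_root[OF \<alpha>(1)]] inner_height_vector[OF \<alpha>(1)] by simp
  then have c_nonneg: "0 \<le> c \<delta> * (\<delta> \<bullet> e\<^sub>\<theta>)" if "\<delta> \<in> \<Delta>" for \<delta>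
    using positive_root_coweight_nonneg[OF root _ that] that by (simp add: c_def inner_e_theta)
  have "(\<Sum>\<delta>\<in>\<Delta>. c \<delta> * (\<delta> \<bullet> e\<^sub>\<theta>)) = \<iota> \<alpha> \<bullet> e\<^sub>\<theta>"
    unfolding c_def by (rule inner_coweight_expansion[symmetric])
  also have "\<dots> = 0" using \<alpha> inner_opp_commute[of \<alpha>] by (simp add: opp_e_theta inner_e_theta)
  finally have "\<forall>\<delta>\<in>\<Delta>. c \<delta> * (\<delta> \<bullet> e\<^sub>\<theta>) = 0"
    using sum_nonneg_eq_0_iff[OF finite_simple, of "\<lambda>\<delta>. c \<delta> * (\<delta> \<bullet> e\<^sub>\<theta>)"] c_nonneg by blast
  then have "c \<delta> * (\<delta> \<bullet> v) = 0" if "\<delta> \<in> \<Delta>" for \<delta>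
    using that v by (cases "\<delta> \<in> \<theta>") (auto simp: inner_e_theta a_theta_def)
  then have "(\<Sum>\<delta>\<in>\<Delta>. c \<delta> * (\<delta> \<bullet> v)) = 0" by (intro sum.neutral) blast
  then have "\<iota> \<alpha> \<bullet> v = 0" unfolding c_def by (simp only: inner_coweight_expansion[symmetric])
  then show "\<alpha> \<bullet> \<iota> v = 0" by (simp add: inner_opp_commute)
qed

lemma weyl_thetaD: "w \<in> W\<^sub>\<theta> \<Longrightarrow> w \<in> weyl R" "w \<in> W\<^sub>\<theta> \<Longrightarrow> v \<in> a_theta \<Delta> \<theta> \<Longrightarrow> w v = v"
  by (simp_all add: weyl_theta_def)

lemma weyl_theta_e_theta: "w \<in> W\<^sub>\<theta> \<Longrightarrow> w e\<^sub>\<theta> = e\<^sub>\<theta>"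
  using weyl_thetaD(2) e_theta_a_theta by blast

lemma id_weyl_theta: "id \<in> W\<^sub>\<theta>"
  by (simp add: weyl_theta_def weyl.weyl_id)

lemma weyl_theta_comp: "w1 \<in> W\<^sub>\<theta> \<Longrightarrow> w2 \<in> W\<^sub>\<theta> \<Longrightarrow> w1 \<circ> w2 \<in> W\<^sub>\<theta>"
  unfolding weyl_theta_def using weyl_comp by auto

lemma weyl_theta_inverse:
  assumes w: "w \<in> W\<^sub>\<theta>" shows "\<exists>w'\<in>W\<^sub>\<theta>. w' \<circ> w = id \<and> w \<circ> w' = id"
proof -
  obtain w' where w': "w' \<in> weyl R" "w' \<circ> w = id" "w \<circ> w' = id"
    using weyl_inverse[OF weyl_thetaD(1)[OF w]] by blast
  have "w' v = v" if "v \<in> a_theta \<Delta> \<theta>" for v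
    using fun_cong[OF w'(2), of v] weyl_thetaD(2)[OF w that] by simp
  then have "w' \<in> W\<^sub>\<theta>" using w'(1) by (simp add: weyl_theta_def)
  then show ?thesis using w' by blast
qed

lemma refl_comp_weyl_theta:
  assumes \<alpha>: "\<alpha> \<in> \<Delta> - \<theta>" and w: "w \<in> W\<^sub>\<theta>" shows "refl \<alpha> \<circ> w \<in> W\<^sub>\<theta>"
proof -
  have "refl \<alpha> \<circ> w \<in> weyl R" using weyl.weyl_step[OF simple_root weyl_thetaD(1)[OF w]] \<alpha> by blast
  moreover have "refl \<alpha> (w v) = v" if "v \<in> a_theta \<Delta> \<theta>" for v
    using refl_fixed[of \<alpha> v] weyl_thetaD(2)[OF w that] \<alpha> that by (simp add: a_theta_def)
  ultimately show ?thesis by (simp add: weyl_theta_def)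
qed

lemma opp_conj_weyl_theta:
  assumes w: "w \<in> W\<^sub>\<theta>" shows "\<iota> \<circ> w \<circ> \<iota> \<in> W\<^sub>\<theta>"
proof -
  have "\<iota> \<circ> w \<circ> \<iota> = w0 R \<Delta> \<circ> w \<circ> w0 R \<Delta>"
    using linear_neg[OF linear_weyl[OF w0(1)]] linear_neg[OF linear_weyl[OF weyl_thetaD(1)[OF w]]]
    by (simp add: fun_eq_iff opp_def)
  moreover have "w0 R \<Delta> \<circ> w \<circ> w0 R \<Delta> \<in> weyl R"
    using weyl_comp[OF weyl_comp[OF w0(1) weyl_thetaD(1)[OF w]] w0(1)] .
  moreover have "(\<iota> \<circ> w \<circ> \<iota>) v = v" if "v \<in> a_theta \<Delta> \<theta>" for v
    using weyl_thetaD(2)[OF w opp_a_theta[OF that]] by (simp add: opp_opp)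
  ultimately show ?thesis by (simp add: weyl_theta_def)
qed

definition theta_roots :: "'a set" where
  "theta_roots = {\<beta>\<in>R. 0 < \<beta> \<bullet> e\<^sub>\<theta>}"

lemma theta_root_chamber_nonneg:
  assumes \<beta>: "\<beta> \<in> theta_roots" and u: "u \<in> chamber \<Delta>" shows "0 \<le> \<beta> \<bullet> u"
proof -
  have root: "\<beta> \<in> R" and pos: "0 < \<beta> \<bullet> e\<^sub>\<theta>" using \<beta> unfolding theta_roots_def by auto
  have "0 < \<beta> \<bullet> height_vector"
  proof (rule ccontr)
    assume "\<not> 0 < \<beta> \<bullet> height_vector"
    then have "0 < (- \<beta>) \<bullet> height_vector" using root_height_nonzero[OF root] by simp
    then have "0 \<le> (- \<beta>) \<bullet> e\<^sub>\<theta>"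
      using positive_root_chamber_nonneg[OF uminus_root[OF root] _ e_theta_chamber] by blast
    then show False using pos by simp
  qed
  then show ?thesis using positive_root_chamber_nonneg[OF root _ u] by blast
qed

lemma weyl_theta_theta_root:
  assumes w: "w \<in> W\<^sub>\<theta>" and \<beta>: "\<beta> \<in> theta_roots" shows "w \<beta> \<in> theta_roots"
proof -
  have "w \<beta> \<bullet> e\<^sub>\<theta> = \<beta> \<bullet> e\<^sub>\<theta>"
    using inner_weyl[OF weyl_thetaD(1)[OF w], of \<beta> e\<^sub>\<theta>] weyl_theta_e_theta[OF w] by simp
  then show ?thesis using \<beta> weyl_root[OF weyl_thetaD(1)[OF w]] by (simp add: theta_roots_def)
qed

lemma weyl_theta_chamber_eq: "(\<Union>w\<in>W\<^sub>\<theta>. w ` chamber \<Delta>) = {v. \<forall>\<beta>\<in>theta_roots. 0 \<le> \<beta> \<bullet> v}"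
proof (intro equalityI subsetI)
  fix x assume "x \<in> (\<Union>w\<in>W\<^sub>\<theta>. w ` chamber \<Delta>)"
  then obtain w u where wu: "w \<in> W\<^sub>\<theta>" "u \<in> chamber \<Delta>" "x = w u" by blast
  obtain w' where w': "w' \<in> W\<^sub>\<theta>" "w \<circ> w' = id" using weyl_theta_inverse[OF wu(1)] by blast
  have "0 \<le> \<beta> \<bullet> x" if \<beta>: "\<beta> \<in> theta_roots" for \<beta>
  proof -
    have "\<beta> \<bullet> x = w' \<beta> \<bullet> u"
      using inner_weyl[OF weyl_thetaD(1)[OF wu(1)], of "w' \<beta>" u] fun_cong[OF w'(2), of \<beta>] wu(3)
      by simp
    then show ?thesis
      using theta_root_chamber_nonneg[OF weyl_theta_theta_root[OF w'(1) \<beta>] wu(2)] by simp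
  qed
  then show "x \<in> {v. \<forall>\<beta>\<in>theta_roots. 0 \<le> \<beta> \<bullet> v}" by blast
next
  fix v assume v: "v \<in> {v. \<forall>\<beta>\<in>theta_roots. 0 \<le> \<beta> \<bullet> v}"
  obtain w where w: "w \<in> W\<^sub>\<theta>" "\<forall>\<alpha>\<in>\<Delta> - \<theta>. 0 \<le> \<alpha> \<bullet> w v"
    using exists_weyl_dominant[of W\<^sub>\<theta> "\<Delta> - \<theta>" v] weyl_thetaD(1) id_weyl_theta refl_comp_weyl_theta
    by blast
  obtain w' where w': "w' \<in> W\<^sub>\<theta>" "w' \<circ> w = id" "w \<circ> w' = id"
    using weyl_theta_inverse[OF w(1)] by blast
  have "w v \<in> chamber \<Delta>"
    unfolding chamber_def
  proof safe
    fix \<alpha> assume \<alpha>: "\<alpha> \<in> \<Delta>"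
    show "0 \<le> \<alpha> \<bullet> w v"
    proof (cases "\<alpha> \<in> \<theta>")
      case False
      then show ?thesis using w(2) \<alpha> by blast
    next
      case True
      then have "\<alpha> \<in> theta_roots" using \<alpha> by (simp add: theta_roots_def inner_e_theta simple_root)
      moreover have "\<alpha> \<bullet> w v = w' \<alpha> \<bullet> v"
        using inner_weyl[OF weyl_thetaD(1)[OF w(1)], of "w' \<alpha>" v] fun_cong[OF w'(3), of \<alpha>] by simp
      ultimately show ?thesis using v weyl_theta_theta_root[OF w'(1)] by simp
    qed
  qed
  moreover have "v = w' (w v)" using fun_cong[OF w'(2), of v] by simp
  ultimately show "v \<in> (\<Union>w\<in>W\<^sub>\<theta>. w ` chamber \<Delta>)" using w'(1) by blast
qed

lemma convex_weyl_theta_chamber: "convex (\<Union>w\<in>W\<^sub>\<theta>. w ` chamber \<Delta>)"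
proof -
  have "{v. \<forall>\<beta>\<in>theta_roots. 0 \<le> \<beta> \<bullet> v} = (\<Inter>\<beta>\<in>theta_roots. {v. \<beta> \<bullet> v \<ge> 0})" by auto
  then show ?thesis
    unfolding weyl_theta_chamber_eq by (auto intro: convex_INT convex_halfspace_ge)
qed

lemma e_theta_pos:
  assumes d: "d \<in> chamber \<Delta>" and \<gamma>: "\<gamma> \<in> \<theta>" "\<gamma> \<bullet> d \<noteq> 0" shows "0 < d \<bullet> e\<^sub>\<theta>"
proof -
  have \<gamma>_simple: "\<gamma> \<in> \<Delta>" using \<gamma>(1) theta_subset by auto
  then have "0 < \<gamma> \<bullet> d" using chamber_inner_nonneg[OF d] \<gamma>(2) by force
  then have "0 < (d \<bullet> coweight \<gamma>) * (\<gamma> \<bullet> e\<^sub>\<theta>)"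
    using chamber_coweight_pos[OF d \<gamma>_simple] \<gamma>(1) inner_e_theta[OF \<gamma>_simple] by simp
  moreover have "0 \<le> (\<Sum>\<delta>\<in>\<Delta> - {\<gamma>}. (d \<bullet> coweight \<delta>) * (\<delta> \<bullet> e\<^sub>\<theta>))"
    using chamber_coweight_nonneg[OF d] by (intro sum_nonneg) (simp add: inner_e_theta)
  ultimately show ?thesis
    using inner_coweight_expansion[of d e\<^sub>\<theta>]
      sum.remove[OF finite_simple \<gamma>_simple, of "\<lambda>\<delta>. (d \<bullet> coweight \<delta>) * (\<delta> \<bullet> e\<^sub>\<theta>)"] by linarith
qed

section \<open>Admissible thickenings of \<open>W\<^sub>\<theta>\<close>-orbits\<close>

abbreviation theta_orbit :: "'a set \<Rightarrow> 'a set" where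
  "theta_orbit D \<equiv> (\<Union>w\<in>W\<^sub>\<theta>. w ` D)"

lemma open_off_theta_walls: "open {v. \<forall>\<gamma>\<in>\<theta>. \<gamma> \<bullet> v \<noteq> 0}"
proof -
  have "{v. \<forall>\<gamma>\<in>\<theta>. \<gamma> \<bullet> v \<noteq> 0} = (\<Inter>\<gamma>\<in>\<theta>. - {v. \<gamma> \<bullet> v = 0})" by auto
  moreover have "finite \<theta>" using finite_subset[OF theta_subset finite_simple] .
  ultimately show ?thesis by (auto intro: open_INT closed_hyperplane)
qed

lemma weyl_theta_orbit_Int_chamber:
  assumes "D \<subseteq> chamber \<Delta>" shows "theta_orbit D \<inter> chamber \<Delta> = D"
proof (intro equalityI subsetI)
  fix p assume "p \<in> theta_orbit D \<inter> chamber \<Delta>"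
  then obtain w d where wd: "w \<in> W\<^sub>\<theta>" "d \<in> D" "p = w d" "p \<in> chamber \<Delta>" by blast
  then have "w d = d" using weyl_chamber_fixed[OF weyl_thetaD(1)[OF wd(1)]] assms by blast
  then show "p \<in> D" using wd by simp
next
  fix d assume "d \<in> D"
  then have "d \<in> id ` D" by simp
  then show "d \<in> theta_orbit D \<inter> chamber \<Delta>" using id_weyl_theta assms \<open>d \<in> D\<close> by blast
qed

lemma closed_weyl_theta_orbit:
  assumes "closed D" shows "closed (theta_orbit D)"
proof (rule closed_UN)
  show "finite W\<^sub>\<theta>" using finite_subset[OF _ finite_weyl] weyl_thetaD(1) by blast
  show "\<forall>w\<in>W\<^sub>\<theta>. closed (w ` D)"
    using closed_injective_linear_image[OF assms] orthogonal_transformation_linear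
      orthogonal_transformation_inj orthogonal_transformation_weyl weyl_thetaD(1) by blast
qed

lemma weyl_theta_image_orbit:
  assumes w: "w \<in> W\<^sub>\<theta>" shows "w ` theta_orbit D \<subseteq> theta_orbit D"
proof (rule image_subsetI)
  fix p assume "p \<in> theta_orbit D"
  then obtain w' d where wd: "w' \<in> W\<^sub>\<theta>" "d \<in> D" "p = w' d" by blast
  then have "w p = (w \<circ> w') d" by simp
  then show "w p \<in> theta_orbit D" using weyl_theta_comp[OF w wd(1)] wd(2) by blast
qed

lemma opp_image_weyl_theta_orbit:
  assumes "\<iota> ` D \<subseteq> D" shows "\<iota> ` theta_orbit D \<subseteq> theta_orbit D"
proof (intro image_subsetI)
  fix p assume "p \<in> theta_orbit D"
  then obtain w d where wd: "w \<in> W\<^sub>\<theta>" "d \<in> D" "p = w d" by blast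
  then have "\<iota> p = (\<iota> \<circ> w \<circ> \<iota>) (\<iota> d)" by (simp add: opp_opp)
  then show "\<iota> p \<in> theta_orbit D" using opp_conj_weyl_theta[OF wd(1)] assms wd(2) by blast
qed

lemma pos_cone_weyl_theta_orbit:
  assumes "pos_cone D" shows "pos_cone (theta_orbit D)"
  unfolding pos_cone_def
proof (intro ballI allI impI)
  fix p and t :: real assume "p \<in> theta_orbit D" "0 < t"
  then obtain w d where wd: "w \<in> W\<^sub>\<theta>" "d \<in> D" "p = w d" by blast
  then have "t *\<^sub>R p = w (t *\<^sub>R d)" using linear_scale[OF linear_weyl[OF weyl_thetaD(1)]] by simp
  moreover have "t *\<^sub>R d \<in> D" using assms wd(2) \<open>0 < t\<close> unfolding pos_cone_def by blast
  ultimately show "t *\<^sub>R p \<in> theta_orbit D" using wd(1) by blast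
qed

lemma weyl_theta_image_chamber_Int:
  assumes N: "\<And>w. w \<in> W\<^sub>\<theta> \<Longrightarrow> w ` N \<subseteq> N"
  shows "(\<Union>w\<in>W\<^sub>\<theta>. w ` (chamber \<Delta> \<inter> N)) = N \<inter> (\<Union>w\<in>W\<^sub>\<theta>. w ` chamber \<Delta>)"
proof (intro equalityI subsetI)
  fix v assume "v \<in> (\<Union>w\<in>W\<^sub>\<theta>. w ` (chamber \<Delta> \<inter> N))"
  then show "v \<in> N \<inter> (\<Union>w\<in>W\<^sub>\<theta>. w ` chamber \<Delta>)" using N by blast
next
  fix v assume "v \<in> N \<inter> (\<Union>w\<in>W\<^sub>\<theta>. w ` chamber \<Delta>)"
  then obtain w u where wu: "v \<in> N" "w \<in> W\<^sub>\<theta>" "u \<in> chamber \<Delta>" "v = w u" by blast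
  obtain w' where w': "w' \<in> W\<^sub>\<theta>" "w' \<circ> w = id" using weyl_theta_inverse[OF wu(2)] by blast
  have "u = w' v" using fun_cong[OF w'(2), of u] wu(4) by simp
  then have "u \<in> N" using N[OF w'(1)] wu(1) by blast
  then show "v \<in> (\<Union>w\<in>W\<^sub>\<theta>. w ` (chamber \<Delta> \<inter> N))" using wu by blast
qed

lemma admissible_chamber_Int:
  assumes "closed N" "pos_cone N" "convex N" "0 \<in> N"
    and invariant: "\<And>w. w \<in> W\<^sub>\<theta> \<Longrightarrow> w ` N \<subseteq> N" "\<iota> ` N \<subseteq> N"
    and walls: "chamber \<Delta> \<inter> N - {0} \<subseteq> {v. \<forall>\<gamma>\<in>\<theta>. \<gamma> \<bullet> v \<noteq> 0}"
  shows "admissible R \<Delta> \<theta> (chamber \<Delta> \<inter> N)"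
  unfolding admissible_def
proof (intro conjI)
  show "closed (chamber \<Delta> \<inter> N)" using assms(1) by (simp add: closed_Int closed_chamber)
  show "pos_cone (chamber \<Delta> \<inter> N)" using assms(2) pos_cone_chamber by (simp add: pos_cone_def)
  show "\<iota> ` (chamber \<Delta> \<inter> N) = chamber \<Delta> \<inter> N"
  proof
    show "\<iota> ` (chamber \<Delta> \<inter> N) \<subseteq> chamber \<Delta> \<inter> N" using opp_chamber invariant(2) by blast
    show "chamber \<Delta> \<inter> N \<subseteq> \<iota> ` (chamber \<Delta> \<inter> N)"
    proof
      fix v assume "v \<in> chamber \<Delta> \<inter> N"
      then have "\<iota> v \<in> chamber \<Delta> \<inter> N" using opp_chamber invariant(2) by blast
      then show "v \<in> \<iota> ` (chamber \<Delta> \<inter> N)" by (rule image_eqI[rotated]) (simp add: opp_opp)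
    qed
  qed
  show "convex (\<Union>w\<in>W\<^sub>\<theta>. w ` (chamber \<Delta> \<inter> N))"
    using weyl_theta_image_chamber_Int[OF invariant(1)]
      convex_Int[OF assms(3) convex_weyl_theta_chamber] by simp
  show "chamber \<Delta> \<inter> N \<inter> (\<Union>\<alpha>\<in>\<theta>. {v. \<alpha> \<bullet> v = 0}) = {0}"
  proof
    show "chamber \<Delta> \<inter> N \<inter> (\<Union>\<alpha>\<in>\<theta>. {v. \<alpha> \<bullet> v = 0}) \<subseteq> {0}" using walls by blast
    have "0 \<in> chamber \<Delta>" by (simp add: chamber_def)
    then show "{0} \<subseteq> chamber \<Delta> \<inter> N \<inter> (\<Union>\<alpha>\<in>\<theta>. {v. \<alpha> \<bullet> v = 0})"
      using assms(4) theta_nonempty by auto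
  qed
qed simp

lemma admissible_cone_thickening:
  assumes D: "admissible R \<Delta> \<theta> D"
    and walls: "chamber \<Delta> \<inter> cone_thickening (theta_orbit D) e\<^sub>\<theta> \<epsilon> - {0} \<subseteq> {v. \<forall>\<gamma>\<in>\<theta>. \<gamma> \<bullet> v \<noteq> 0}"
  shows "admissible R \<Delta> \<theta> (chamber \<Delta> \<inter> cone_thickening (theta_orbit D) e\<^sub>\<theta> \<epsilon>)"
proof (rule admissible_chamber_Int[OF _ _ _ _ _ _ walls])
  have D: "closed D" "pos_cone D" "\<iota> ` D = D" "convex (theta_orbit D)" "0 \<in> D"
    using D unfolding admissible_def by auto
  show "closed (cone_thickening (theta_orbit D) e\<^sub>\<theta> \<epsilon>)"
    by (rule closed_cone_thickening[OF closed_weyl_theta_orbit[OF D(1)]])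
  show "pos_cone (cone_thickening (theta_orbit D) e\<^sub>\<theta> \<epsilon>)"
    by (rule pos_cone_cone_thickening[OF pos_cone_weyl_theta_orbit[OF D(2)]])
  show "convex (cone_thickening (theta_orbit D) e\<^sub>\<theta> \<epsilon>)"
    using convex_cone_thickening[OF D(4)] .
  have "0 \<in> id ` D" using D(5) by simp
  then have "0 \<in> theta_orbit D" using id_weyl_theta by blast
  then show "0 \<in> cone_thickening (theta_orbit D) e\<^sub>\<theta> \<epsilon>"
    unfolding cone_thickening_def by (intro CollectI bexI[of _ 0]) simp_all
  show "w ` cone_thickening (theta_orbit D) e\<^sub>\<theta> \<epsilon> \<subseteq> cone_thickening (theta_orbit D) e\<^sub>\<theta> \<epsilon>"
    if w: "w \<in> W\<^sub>\<theta>" for w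
    by (rule orthogonal_transformation_cone_thickening[OF
          orthogonal_transformation_weyl[OF weyl_thetaD(1)[OF w]] weyl_theta_e_theta[OF w]
          weyl_theta_image_orbit[OF w]])
  have "\<iota> ` D \<subseteq> D" using D(3) by simp
  then show "\<iota> ` cone_thickening (theta_orbit D) e\<^sub>\<theta> \<epsilon> \<subseteq> cone_thickening (theta_orbit D) e\<^sub>\<theta> \<epsilon>"
    by (rule orthogonal_transformation_cone_thickening[OF orthogonal_transformation_opp opp_e_theta
          opp_image_weyl_theta_orbit])
qed

lemma admissible_interior_of_cone_thickening:
  assumes "admissible R \<Delta> \<theta> D" "0 < \<epsilon>"
  shows "D - {0} \<subseteq>
    top_of_set (chamber \<Delta>) interior_of (chamber \<Delta> \<inter> cone_thickening (theta_orbit D) e\<^sub>\<theta> \<epsilon>)"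
proof
  fix d assume d: "d \<in> D - {0}"
  have D: "D \<subseteq> chamber \<Delta>" "D - {0} \<subseteq> {v. \<forall>\<gamma>\<in>\<theta>. \<gamma> \<bullet> v \<noteq> 0}"
    using assms(1) unfolding admissible_def by auto
  have d_chamber: "d \<in> chamber \<Delta>" using D(1) d by blast
  obtain \<gamma> where \<gamma>: "\<gamma> \<in> \<theta>" using theta_nonempty by blast
  then have "\<gamma> \<bullet> d \<noteq> 0" using D(2) d by blast
  then have "0 < d \<bullet> e\<^sub>\<theta>" by (rule e_theta_pos[OF d_chamber \<gamma>])
  moreover have "d \<in> theta_orbit D" using weyl_theta_orbit_Int_chamber[OF D(1)] d by blast
  ultimately show "d \<in>
      top_of_set (chamber \<Delta>) interior_of (chamber \<Delta> \<inter> cone_thickening (theta_orbit D) e\<^sub>\<theta> \<epsilon>)"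
    by (intro interior_of_cone_thickening d_chamber assms(2))
qed

lemma exists_cone_thickening_inside:
  assumes D: "admissible R \<Delta> \<theta> D"
    and C0: "openin (top_of_set (chamber \<Delta>)) C0" "pos_cone C0" "D - {0} \<subseteq> C0"
  shows "\<exists>\<epsilon>>0. chamber \<Delta> \<inter> cone_thickening (theta_orbit D) e\<^sub>\<theta> \<epsilon> - {0}
                  \<subseteq> {v \<in> C0. \<forall>\<gamma>\<in>\<theta>. \<gamma> \<bullet> v \<noteq> 0}"
proof -
  have D: "closed D" "pos_cone D" "D \<subseteq> chamber \<Delta>" "D - {0} \<subseteq> {v. \<forall>\<gamma>\<in>\<theta>. \<gamma> \<bullet> v \<noteq> 0}"
    using D unfolding admissible_def by auto
  define G where "G = {v \<in> C0. \<forall>\<gamma>\<in>\<theta>. \<gamma> \<bullet> v \<noteq> 0}"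
  have "compact (chamber \<Delta> \<inter> sphere 0 1 - G)"
    unfolding G_def Collect_conj_eq Collect_mem_eq
    by (intro compact_sphere_Diff_openin closed_chamber openin_Int_open C0(1) open_off_theta_walls)
  moreover have "(chamber \<Delta> \<inter> sphere 0 1 - G) \<inter> theta_orbit D = {}"
  proof (rule equals0I)
    fix v assume v: "v \<in> (chamber \<Delta> \<inter> sphere 0 1 - G) \<inter> theta_orbit D"
    then have "v \<in> D - {0}" using weyl_theta_orbit_Int_chamber[OF D(3)] by auto
    then have "v \<in> G" using D(4) C0(3) unfolding G_def by blast
    then show False using v by blast
  qed
  ultimately have "\<exists>\<epsilon>>0. (chamber \<Delta> \<inter> sphere 0 1 - G) \<inter> cone_thickening (theta_orbit D) e\<^sub>\<theta> \<epsilon> = {}"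
    by (rule compact_disjoint_cone_thickening[OF _ closed_weyl_theta_orbit[OF D(1)]])
  then obtain \<epsilon> where \<epsilon>: "0 < \<epsilon>"
    "(chamber \<Delta> \<inter> sphere 0 1 - G) \<inter> cone_thickening (theta_orbit D) e\<^sub>\<theta> \<epsilon> = {}"
    by blast
  have "pos_cone (chamber \<Delta> \<inter> cone_thickening (theta_orbit D) e\<^sub>\<theta> \<epsilon>)"
    using pos_cone_chamber pos_cone_cone_thickening[OF pos_cone_weyl_theta_orbit[OF D(2)]]
    unfolding pos_cone_def by blast
  moreover have "pos_cone G" using C0(2) unfolding G_def pos_cone_def by auto
  ultimately have "chamber \<Delta> \<inter> cone_thickening (theta_orbit D) e\<^sub>\<theta> \<epsilon> - {0} \<subseteq> G"
    by (rule pos_cone_Diff_zero_subset) (use \<epsilon>(2) in blast)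
  then show ?thesis using \<epsilon>(1) unfolding G_def by blast
qed

end

theorem lemma5p4:
  fixes R \<Delta> \<theta> D C0 :: "'a::euclidean_space set"
  assumes "root_system R" and "is_base R \<Delta>"
    and "\<theta> \<subseteq> \<Delta>" and "\<theta> \<noteq> {}"
    and "(\<lambda>\<alpha>. \<lambda>v. \<alpha> \<bullet> opp R \<Delta> v) ` \<theta> = (\<lambda>\<alpha>. \<lambda>v. \<alpha> \<bullet> v) ` \<theta>"
    and "admissible R \<Delta> \<theta> D"
    and "openin (top_of_set (chamber \<Delta>)) C0" and "pos_cone C0"
    and "D - {0} \<subseteq> C0"
  shows "\<exists>C. admissible R \<Delta> \<theta> C \<and>
           D - {0} \<subseteq> (top_of_set (chamber \<Delta>)) interior_of C \<and>
           C \<subseteq> C0 \<union> {0}"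
proof -
  interpret theta_base R \<Delta> \<theta> using assms(1-5) by unfold_locales
  obtain \<epsilon> where \<epsilon>: "0 < \<epsilon>"
    and inside: "chamber \<Delta> \<inter> cone_thickening (theta_orbit D) e\<^sub>\<theta> \<epsilon> - {0}
                   \<subseteq> {v \<in> C0. \<forall>\<gamma>\<in>\<theta>. \<gamma> \<bullet> v \<noteq> 0}"
    using exists_cone_thickening_inside[OF assms(6-9)] by blast
  define C where "C = chamber \<Delta> \<inter> cone_thickening (theta_orbit D) e\<^sub>\<theta> \<epsilon>"
  have "admissible R \<Delta> \<theta> C"
    unfolding C_def by (rule admissible_cone_thickening[OF assms(6)]) (use inside in blast)
  moreover have "D - {0} \<subseteq> top_of_set (chamber \<Delta>) interior_of C"
    unfolding C_def using admissible_interior_of_cone_thickening[OF assms(6) \<epsilon>] .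
  moreover have "C \<subseteq> C0 \<union> {0}" using inside unfolding C_def by blast
  ultimately show ?thesis by blast
qed

end
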